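(* Let $S$ be an off-rational subgroup of $\mathbb R^2$ and $\xi$ an off-rational subgroup of $\mathbb R$ such that $\tau(S)\supset\xi$. Then there is a nested sequence $\Gamma=(\Gamma_j)_{j\ge1}$ of lattices $\Gamma_1\supset\Gamma_2\supset\cdots$ in $H_3(\mathbb R)$ such that $S_\Gamma=S$ and $\xi_\Gamma=\xi$. If $S$ is dense in $\mathbb R^2$ then $\bigcap_j p(\Gamma_j)=\{0\}$. If, in addition, $\xi$ is dense in $\mathbb R$, then $\bigcap_j\Gamma_j=\{1\}$.
   Context: $H_3(\mathbb R)$: real $3\times3$ upper triangular unipotent matrices; $c(t)$ has $(1,3)$ entry $t$, other off-diagonal entries $0$; for $g$ with $(1,2)$ entry $t_1$ and $(2,3)$ entry $t_2$, $p(g)=(t_1,t_2)$. A lattice is a discrete subgroup of finite covolume. For a lattice $\Lambda$: $\Lambda\cap\{c(t)\}=\{c(m\xi_\Lambda):m\in\mathbb Z\}$, $\xi_\Lambda>0$; $p(\Lambda)=A\mathbb Z^2$, $A\in GL_2(\mathbb R)$, and $p(\Lambda)^*:=(A^* )^{-1}\mathbb Z^2$. $S_\Gamma:=\bigcup_j p(\Gamma_j)^*$, $\xi_\Gamma:=\bigcup_j\xi_{\Gamma_j}^{-1}\mathbb Z$. Off-rational: a subgroup $S\subset\mathbb R^m$ whose closure is cocompact and $S=AQ$ with $A\in GL_m(\mathbb R)$ and $Q\subset\mathbb Q^m$ a subgroup. Writing $Q=\bigcup_jA_j^{-1}\mathbb Z^m$ with $A_j\in GL_m(\mathbb R)\cap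 M_m(\mathbb Z)$ and $A_1^{-1}\mathbb Z^m\subset A_2^{-1}\mathbb Z^m\subset\cdots$, set $\tau(S):=\bigcup_j\frac{\det A}{\det A_j}\mathbb Z$ (independent of choices). *)

theory Defs
  imports "HOL-Analysis.Analysis"
begin

text \<open>An element of H_3(R), the upper triangular unipotent 3x3 matrix with
(1,2) entry a, (2,3) entry b and (1,3) entry c, is represented by its
coordinates (a, b, c). The group law below is matrix multiplication in these
coordinates; the topology is that of R^3 and Haar measure is Lebesgue measure.\<close>

type_synonym heis = "real \<times> real \<times> real"

definition heis_mult :: "heis \<Rightarrow> heis \<Rightarrow> heis" where
  "heis_mult g h = (case g of (a, b, c) \<Rightarrow> case h of (a', b', c') \<Rightarrow>
      (a + a', b + b', c + c' + a * b'))"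

definition heis_one :: heis where
  "heis_one = (0, 0, 0)"

definition heis_inv :: "heis \<Rightarrow> heis" where
  "heis_inv g = (case g of (a, b, c) \<Rightarrow> (- a, - b, a * b - c))"

definition heis_c :: "real \<Rightarrow> heis" where
  "heis_c t = (0, 0, t)"

definition heis_p :: "heis \<Rightarrow> real^2" where
  "heis_p g = (case g of (a, b, c) \<Rightarrow> vector [a, b])"

definition heis_subgroup :: "heis set \<Rightarrow> bool" where
  "heis_subgroup G \<longleftrightarrow> heis_one \<in> G \<and> (\<forall>g\<in>G. \<forall>h\<in>G. heis_mult g h \<in> G)
      \<and> (\<forall>g\<in>G. heis_inv g \<in> G)"

definition heis_discrete :: "heis set \<Rightarrow> bool" where
  "heis_discrete G \<longleftrightarrow> (\<forall>g\<in>G. \<exists>e>0. \<forall>h\<in>G. dist h g < e \<longrightarrow> h = g)"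

text \<open>Finite covolume: there is a Borel (strict) fundamental domain for the
action of G on H_3(R) by left translation, of finite Haar (= Lebesgue) measure.\<close>

definition heis_finite_covolume :: "heis set \<Rightarrow> bool" where
  "heis_finite_covolume G \<longleftrightarrow> (\<exists>F. F \<in> sets lborel \<and> emeasure lborel F < \<infinity> \<and>
      (\<forall>g. \<exists>!\<gamma>. \<gamma> \<in> G \<and> heis_mult (heis_inv \<gamma>) g \<in> F))"

definition heis_lattice :: "heis set \<Rightarrow> bool" where
  "heis_lattice G \<longleftrightarrow> heis_subgroup G \<and> heis_discrete G \<and> heis_finite_covolume G"

definition int_vecs :: "(real^'n) set" where
  "int_vecs = {v. \<forall>i. v $ i \<in> \<int>}"

definition xi_lat :: "heis set \<Rightarrow> real" where
  "xi_lat L = (THE \<xi>. \<xi> > 0 \<and> L \<inter> range heis_c = {heis_c (of_int m * \<xi>) | m. True})"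

definition dual_lat :: "(real^'n) set \<Rightarrow> (real^'n) set" where
  "dual_lat L = (let A = (SOME A :: real^'n^'n. invertible A \<and> L = (\<lambda>z. A *v z) ` int_vecs)
     in (\<lambda>z. matrix_inv (transpose A) *v z) ` int_vecs)"

definition S_Gamma :: "(nat \<Rightarrow> heis set) \<Rightarrow> (real^2) set" where
  "S_Gamma \<Gamma> = (\<Union>j. dual_lat (heis_p ` \<Gamma> j))"

definition xi_Gamma :: "(nat \<Rightarrow> heis set) \<Rightarrow> real set" where
  "xi_Gamma \<Gamma> = (\<Union>j. {of_int m / xi_lat (\<Gamma> j) | m. True})"

definition rat_vecs :: "(real^'n) set" where
  "rat_vecs = {v. \<forall>i. v $ i \<in> \<rat>}"

definition add_subgroup :: "'a::ab_group_add set \<Rightarrow> bool" where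
  "add_subgroup Q \<longleftrightarrow> 0 \<in> Q \<and> (\<forall>x\<in>Q. \<forall>y\<in>Q. x + y \<in> Q) \<and> (\<forall>x\<in>Q. - x \<in> Q)"

definition cocompact :: "(real^'n) set \<Rightarrow> bool" where
  "cocompact T \<longleftrightarrow> (\<exists>K. compact K \<and> (\<forall>v. \<exists>t\<in>T. \<exists>k\<in>K. v = t + k))"

definition off_rational :: "(real^'n) set \<Rightarrow> bool" where
  "off_rational S \<longleftrightarrow> add_subgroup S \<and> cocompact (closure S) \<and>
     (\<exists>(A::real^'n^'n) Q. invertible A \<and> add_subgroup Q \<and> Q \<subseteq> rat_vecs \<and> S = (\<lambda>q. A *v q) ` Q)"

text \<open>T is tau(S) computed from one admissible choice of data (A, Q, (A_j)).\<close>

definition is_tau :: "(real^'n) set \<Rightarrow> real set \<Rightarrow> bool" where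
  "is_tau S T \<longleftrightarrow> (\<exists>(A::real^'n^'n) Q (As :: nat \<Rightarrow> real^'n^'n).
     invertible A \<and> add_subgroup Q \<and> Q \<subseteq> rat_vecs \<and> S = (\<lambda>q. A *v q) ` Q \<and>
     (\<forall>j. invertible (As j) \<and> (\<forall>i k. As j $ i $ k \<in> \<int>)) \<and>
     (\<forall>j. (\<lambda>z. matrix_inv (As j) *v z) ` int_vecs \<subseteq> (\<lambda>z. matrix_inv (As (Suc j)) *v z) ` int_vecs) \<and>
     Q = (\<Union>j. (\<lambda>z. matrix_inv (As j) *v z) ` int_vecs) \<and>
     T = (\<Union>j. {of_int m * (det A / det (As j)) | m. True}))"

definition tau :: "(real^'n) set \<Rightarrow> real set" where
  "tau S = (SOME T. is_tau S T)"

end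

(*
  Write S = A Q, where Q is the increasing union of the lattices M_k^-1 Z^2 (M_k integral), and
  xi as the increasing union of cyclic groups g_j Z.  Since g_j lies in tau(S), after passing to a
  subsequence k_j one has g_j (det M_k_j / det A) in Z.  Take as planar lattice of Gamma_j the dual
  B_j Z^2 of A M_k_j^-1 Z^2, so det B_j = det M_k_j / det A is an integer multiple of 1/g_j, and
  let Gamma_j consist of the points (B_j n, psi_j(n) + (1/g_j) Z) for a quadratic psi_j: this is a
  subgroup precisely because the cocycle of the group law is absorbed by psi_j up to multiples of
  det B_j.  Consecutive lattices nest once the linear part of psi_(j+1) is chosen from psi_j.
  Density of S (resp. xi) makes a common point of the planar (resp. central) lattices pair
  integrally with a dense set, which forces it to vanish.
*)

theory Submission
  imports Defs
begin

definition int_multiple :: "real \<Rightarrow> real \<Rightarrow> bool" where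
  "int_multiple \<eta> z \<longleftrightarrow> (\<exists>k::int. z = of_int k * \<eta>)"

lemma int_multipleE:
  assumes "int_multiple \<eta> z"
  obtains k :: int where "z = of_int k * \<eta>"
  using assms unfolding int_multiple_def by blast

lemma int_multiple_of_int [simp]: "int_multiple \<eta> (of_int k * \<eta>)" "int_multiple \<eta> (\<eta> * of_int k)"
  unfolding int_multiple_def by (auto simp: mult.commute)

lemma int_multiple_0 [simp]: "int_multiple \<eta> 0"
  using int_multiple_of_int(1)[of \<eta> 0] by simp

lemma int_multiple_add: "int_multiple \<eta> a \<Longrightarrow> int_multiple \<eta> b \<Longrightarrow> int_multiple \<eta> (a + b)"
  unfolding int_multiple_def by (metis distrib_right of_int_add)

lemma int_multiple_minus: "int_multiple \<eta> a \<Longrightarrow> int_multiple \<eta> (- a)"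
  unfolding int_multiple_def by (metis mult_minus_left of_int_minus)

lemma int_multiple_diff: "int_multiple \<eta> a \<Longrightarrow> int_multiple \<eta> b \<Longrightarrow> int_multiple \<eta> (a - b)"
  by (metis diff_conv_add_uminus int_multiple_add int_multiple_minus)

lemma int_multiple_mult_Ints: "int_multiple \<eta> a \<Longrightarrow> x \<in> \<int> \<Longrightarrow> int_multiple \<eta> (a * x)"
  unfolding int_multiple_def by (metis Ints_cases mult.assoc mult.commute of_int_mult)

lemma int_multiple_trans: "int_multiple \<eta> a \<Longrightarrow> int_multiple a b \<Longrightarrow> int_multiple \<eta> b"
  unfolding int_multiple_def by (metis mult.assoc mult.commute of_int_mult)

lemma int_multiple_inverse:
  assumes "int_multiple b a" "a > 0" "b > 0"
  shows "int_multiple (1 / a) (1 / b)"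
proof -
  obtain k :: int where k: "a = of_int k * b" using assms(1) by (rule int_multipleE)
  then have "of_int k \<noteq> (0::real)" using assms(2) by auto
  then have "1 / b = of_int k * (1 / a)" unfolding k using assms(3) by simp
  then show ?thesis by (simp only: int_multiple_of_int)
qed

lemma int_multiple_abs_less:
  assumes "int_multiple \<eta> t" "\<bar>t\<bar> < \<eta>"
  shows "t = 0"
proof -
  obtain k :: int where k: "t = of_int k * \<eta>" using assms(1) by (rule int_multipleE)
  have "\<eta> > 0" using assms(2) by linarith
  then have "\<bar>of_int k\<bar> < (1::real)" using k assms(2) by (simp add: abs_mult)
  then have "k = 0" by linarith
  then show "t = 0" using k by simp
qed

lemma ex1_int_multiple_between:
  assumes "\<eta> > 0"
  shows "\<exists>!z. int_multiple \<eta> (z - a) \<and> c - \<eta> < z \<and> z \<le> c"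
proof (rule ex_ex1I)
  define k where "k = \<lfloor>(c - a) / \<eta>\<rfloor>"
  have "(c - a) / \<eta> - 1 < of_int k" "of_int k \<le> (c - a) / \<eta>"
    unfolding k_def by linarith+
  then have "int_multiple \<eta> (a + of_int k * \<eta> - a) \<and> c - \<eta> < a + of_int k * \<eta> \<and> a + of_int k * \<eta> \<le> c"
    using assms by (simp add: field_simps)
  then show "\<exists>z. int_multiple \<eta> (z - a) \<and> c - \<eta> < z \<and> z \<le> c" ..
next
  fix z z' assume z: "int_multiple \<eta> (z - a) \<and> c - \<eta> < z \<and> z \<le> c"
    and z': "int_multiple \<eta> (z' - a) \<and> c - \<eta> < z' \<and> z' \<le> c"
  have "int_multiple \<eta> ((z - a) - (z' - a))" using z z' by (blast intro: int_multiple_diff)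
  moreover have "\<bar>(z - a) - (z' - a)\<bar> < \<eta>" using z z' by linarith
  ultimately show "z = z'" using int_multiple_abs_less by fastforce
qed

definition int_matrix :: "real^'n^'m \<Rightarrow> bool" where
  "int_matrix C \<longleftrightarrow> (\<forall>i j. C $ i $ j \<in> \<int>)"

definition lattice_of :: "real^'n^'n \<Rightarrow> (real^'n) set" where
  "lattice_of B = (\<lambda>z. B *v z) ` int_vecs"

lemma matrix_vector_mult_2:
  fixes B :: "real^2^2"
  shows "(B *v x) $ 1 = B$1$1 * x$1 + B$1$2 * x$2" "(B *v x) $ 2 = B$2$1 * x$1 + B$2$2 * x$2"
  by (simp_all add: matrix_vector_mult_def sum_2)

lemma matrix_matrix_mult_2: "(A ** B) $ i $ j = A$i$1 * B$1$j + A$i$2 * B$2$j" for A B :: "real^2^2"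
  by (simp add: matrix_matrix_mult_def sum_2)

lemma vec_2_eq_iff: "(v::real^2) = w \<longleftrightarrow> v$1 = w$1 \<and> v$2 = w$2"
  by (simp add: vec_eq_iff forall_2)

lemma int_vecs_2_iff: "(v::real^2) \<in> int_vecs \<longleftrightarrow> v$1 \<in> \<int> \<and> v$2 \<in> \<int>"
  unfolding int_vecs_def by (simp add: forall_2)

lemma int_vecs_2_cases:
  assumes "(v::real^2) \<in> int_vecs"
  obtains k l :: int where "v = vector [of_int k, of_int l]"
  using assms unfolding int_vecs_2_iff vec_2_eq_iff by (auto elim!: Ints_cases)

lemma inner_2: "(x::real^2) \<bullet> y = x$1 * y$1 + x$2 * y$2"
  by (simp add: inner_vec_def sum_2)

section \<open>Lattices and their duals\<close>

lemma matrix_inv_right: "invertible A \<Longrightarrow> A ** matrix_inv A = mat 1"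
  and matrix_inv_left: "invertible A \<Longrightarrow> matrix_inv A ** A = mat 1"
  for A :: "real^'n^'n"
  unfolding invertible_def matrix_inv_def by (metis (mono_tags, lifting) someI_ex)+

lemma matrix_inv_unique:
  fixes A X :: "real^'n^'n"
  assumes "invertible A" "X ** A = mat 1"
  shows "matrix_inv A = X"
proof -
  have "X = X ** (A ** matrix_inv A)" by (simp add: matrix_inv_right[OF assms(1)] matrix_mul_rid)
  also have "\<dots> = matrix_inv A" by (simp add: matrix_mul_assoc assms(2) matrix_mul_lid)
  finally show ?thesis by simp
qed

lemma invertible_matrix_inv:
  fixes A :: "real^'n^'n"
  assumes "invertible A"
  shows "invertible (matrix_inv A)"
  using matrix_inv_left[OF assms] matrix_inv_right[OF assms] unfolding invertible_def by blast

lemma det_matrix_inv: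
  fixes A :: "real^'n^'n"
  assumes "invertible A"
  shows "det (matrix_inv A) = 1 / det A"
proof -
  have "det A * det (matrix_inv A) = 1"
    using matrix_inv_right[OF assms] by (metis det_I det_mul)
  moreover from this have "det A \<noteq> 0" by auto
  ultimately show ?thesis by (simp add: field_simps)
qed

lemma int_matrix_det: "int_matrix A \<Longrightarrow> det A \<in> \<int>" for A :: "real^'n^'n"
  unfolding int_matrix_def det_def by (intro Ints_sum Ints_mult Ints_prod) auto

lemma int_matrix_transpose: "int_matrix A \<Longrightarrow> int_matrix (transpose A)"
  unfolding int_matrix_def transpose_def by simp

lemma int_matrix_mult_int_vecs: "int_matrix U \<Longrightarrow> z \<in> int_vecs \<Longrightarrow> U *v z \<in> int_vecs"
  unfolding int_matrix_def int_vecs_def matrix_vector_mult_def by (auto intro!: Ints_sum Ints_mult)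

lemma lattice_of_mult: "lattice_of (A ** X) = (\<lambda>v. A *v v) ` lattice_of X"
  unfolding lattice_of_def image_image by (simp add: matrix_vector_mul_assoc)

lemma lattice_of_subset_imp_int_factor:
  fixes X Y :: "real^'n^'n"
  assumes Y: "invertible Y" and sub: "lattice_of X \<subseteq> lattice_of Y"
  shows "\<exists>U. int_matrix U \<and> X = Y ** U"
proof (intro exI conjI)
  let ?U = "matrix_inv Y ** X"
  show "int_matrix ?U" unfolding int_matrix_def
  proof (intro allI)
    fix i j
    have "X *v axis j 1 \<in> lattice_of Y"
      using sub unfolding lattice_of_def int_vecs_def by (auto simp: axis_def)
    then obtain z where z: "z \<in> int_vecs" "X *v axis j 1 = Y *v z" unfolding lattice_of_def by auto
    have "?U *v axis j 1 = matrix_inv Y *v (Y *v z)"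
      by (simp add: matrix_vector_mul_assoc[symmetric] z(2))
    also have "\<dots> = z" by (simp add: matrix_vector_mul_assoc matrix_inv_left[OF Y])
    finally have "?U *v axis j 1 = z" .
    then show "?U $ i $ j \<in> \<int>"
      using z(1) unfolding int_vecs_def matrix_vector_mult_basis column_def by force
  qed
  show "X = Y ** ?U"
    by (simp add: matrix_mul_assoc matrix_inv_right[OF Y] matrix_mul_lid)
qed

lemma lattice_of_inv_subset_imp_int_factor:
  fixes X Y :: "real^'n^'n"
  assumes X: "invertible X" and Y: "invertible Y"
    and sub: "lattice_of (matrix_inv X) \<subseteq> lattice_of (matrix_inv Y)"
  shows "\<exists>U. int_matrix U \<and> Y = U ** X"
proof -
  obtain U where U: "int_matrix U" "matrix_inv X = matrix_inv Y ** U"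
    using lattice_of_subset_imp_int_factor[OF invertible_matrix_inv[OF Y] sub] by blast
  have "Y ** matrix_inv X = U"
    unfolding U(2) by (simp add: matrix_mul_assoc matrix_inv_right[OF Y] matrix_mul_lid)
  then have "U ** X = Y"
    by (metis matrix_mul_assoc matrix_inv_left[OF X] matrix_mul_rid)
  then show ?thesis using U(1) by blast
qed

lemma lattice_of_dual_anti_mono:
  fixes X Y :: "real^'n^'n"
  assumes X: "invertible X" and Y: "invertible Y" and sub: "lattice_of X \<subseteq> lattice_of Y"
  shows "lattice_of (matrix_inv (transpose Y)) \<subseteq> lattice_of (matrix_inv (transpose X))"
proof -
  obtain U where U: "int_matrix U" "X = Y ** U"
    using lattice_of_subset_imp_int_factor[OF Y sub] by blast
  have T: "invertible (transpose X)" "invertible (transpose Y)"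
    using X Y by (simp_all add: transpose_invertible)
  have "matrix_inv (transpose Y) = matrix_inv (transpose X) ** transpose U"
  proof (rule matrix_inv_unique[OF T(2)])
    have "transpose X = transpose U ** transpose Y" using U(2) by (simp add: matrix_transpose_mul)
    then show "matrix_inv (transpose X) ** transpose U ** transpose Y = mat 1"
      by (metis matrix_mul_assoc matrix_inv_left[OF T(1)])
  qed
  then show ?thesis
    unfolding lattice_of_def
    using int_matrix_mult_int_vecs[OF int_matrix_transpose[OF U(1)]]
    by (auto simp: matrix_vector_mul_assoc[symmetric])
qed

lemma dual_lat_lattice_of:
  fixes B :: "real^'n^'n"
  assumes B: "invertible B"
  shows "dual_lat (lattice_of B) = lattice_of (matrix_inv (transpose B))"
proof -
  define A where "A = (SOME A :: real^'n^'n. invertible A \<and> lattice_of B = (\<lambda>z. A *v z) ` int_vecs)"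
  have "invertible A \<and> lattice_of B = (\<lambda>z. A *v z) ` int_vecs"
    unfolding A_def by (rule someI[of _ B]) (simp add: B lattice_of_def)
  then have A: "invertible A" "lattice_of B = lattice_of A" unfolding lattice_of_def by auto
  have "dual_lat (lattice_of B) = lattice_of (matrix_inv (transpose A))"
    unfolding dual_lat_def Let_def by (simp add: A_def lattice_of_def)
  also have "\<dots> = lattice_of (matrix_inv (transpose B))"
    using lattice_of_dual_anti_mono[OF A(1) B] lattice_of_dual_anti_mono[OF B A(1)] A(2) by blast
  finally show ?thesis .
qed

lemma inner_lattice_of_dual_Ints:
  fixes B :: "real^'n^'n"
  assumes "invertible B" "x \<in> lattice_of B" "s \<in> lattice_of (matrix_inv (transpose B))"
  shows "x \<bullet> s \<in> \<int>"
proof -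
  obtain n m where nm: "n \<in> int_vecs" "x = B *v n" "m \<in> int_vecs" "s = matrix_inv (transpose B) *v m"
    using assms(2,3) unfolding lattice_of_def by blast
  have "transpose B *v s = m"
    unfolding nm(4) matrix_vector_mul_assoc
    by (simp add: matrix_inv_right assms(1) transpose_invertible del: transpose_matrix_vector)
  moreover have "x \<bullet> s = n \<bullet> (transpose B *v s)"
    unfolding nm(2) by (metis dot_lmul_matrix inner_commute transpose_matrix_vector)
  ultimately show ?thesis
    using nm(1,3) unfolding inner_vec_def int_vecs_def by (auto intro!: Ints_sum Ints_mult)
qed

lemma half_notin_Ints: "(1 / 2 :: real) \<notin> \<int>"
proof
  assume "(1 / 2 :: real) \<in> \<int>"
  then obtain k :: int where "1 / 2 = (of_int k :: real)" by (auto elim: Ints_cases)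
  then have "1 = 2 * k" by linarith
  then show False by presburger
qed

lemma inner_Ints_on_dense_imp_zero:
  fixes x :: "'a::real_inner"
  assumes "closure S = UNIV" "\<And>s. s \<in> S \<Longrightarrow> x \<bullet> s \<in> \<int>"
  shows "x = 0"
proof (rule ccontr)
  assume "x \<noteq> 0"
  have closed: "closed {s. x \<bullet> s \<in> \<int>}"
    using closed_vimage[OF closed_Ints, of "\<lambda>s. x \<bullet> s"] by (simp add: vimage_def continuous_intros)
  have "closure S \<subseteq> {s. x \<bullet> s \<in> \<int>}" by (rule closure_minimal[OF _ closed]) (use assms(2) in blast)
  then have "x \<bullet> ((1 / (2 * (x \<bullet> x))) *\<^sub>R x) \<in> \<int>" using assms(1) by blast
  moreover have "x \<bullet> ((1 / (2 * (x \<bullet> x))) *\<^sub>R x) = 1 / 2" using \<open>x \<noteq> 0\<close> by simp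
  ultimately show False using half_notin_Ints by metis
qed

section \<open>The lattices \<open>\<Gamma>(B, \<eta>, u, v)\<close>\<close>

text \<open>Over the plane lattice point \<open>B n\<close> the \<open>c\<close>-coordinates form the coset \<open>\<psi>(n) + \<eta>\<int>\<close>.
  The quadratic part of \<open>\<psi>\<close> absorbs the cocycle \<open>(B n)\<^sub>1 (B p)\<^sub>2\<close> of the group law up to
  multiples of \<open>det B\<close>; the linear part \<open>(u, v)\<close> is free and is used to nest the lattices.\<close>

definition heis_section :: "real^2^2 \<Rightarrow> real \<Rightarrow> real \<Rightarrow> real \<Rightarrow> real \<Rightarrow> real" where
  "heis_section B u v n1 n2 =
     B$1$1*B$2$1*n1^2/2 + B$1$1*B$2$2*n1*n2 + B$1$2*B$2$2*n2^2/2 + u * n1 + v * n2"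

definition heis_lat :: "real^2^2 \<Rightarrow> real \<Rightarrow> real \<Rightarrow> real \<Rightarrow> heis set" where
  "heis_lat B \<eta> u v = {(x1, x2, z). \<exists>(n1::int) (n2::int).
      x1 = B$1$1 * of_int n1 + B$1$2 * of_int n2 \<and> x2 = B$2$1 * of_int n1 + B$2$2 * of_int n2 \<and>
      int_multiple \<eta> (z - heis_section B u v (of_int n1) (of_int n2))}"

lemma heis_latE:
  assumes "g \<in> heis_lat B \<eta> u v"
  obtains n1 n2 :: int and z where "g = (B$1$1*n1 + B$1$2*n2, B$2$1*n1 + B$2$2*n2, z)"
    "int_multiple \<eta> (z - heis_section B u v n1 n2)"
  using assms unfolding heis_lat_def by auto

lemma heis_latI:
  "int_multiple \<eta> (z - heis_section B u v (of_int n1) (of_int n2)) \<Longrightarrow>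
   (B$1$1 * of_int n1 + B$1$2 * of_int n2, B$2$1 * of_int n1 + B$2$2 * of_int n2, z) \<in> heis_lat B \<eta> u v"
  unfolding heis_lat_def by auto

lemma heis_section_cocycle:
  "heis_section B u v n1 n2 + heis_section B u v p1 p2 + (B$1$1*n1 + B$1$2*n2) * (B$2$1*p1 + B$2$2*p2)
     - heis_section B u v (n1 + p1) (n2 + p2) = - det B * p1 * n2"
  by (simp add: heis_section_def det_2 power2_eq_square field_simps)

lemma heis_section_minus:
  "(B$1$1*n1 + B$1$2*n2) * (B$2$1*n1 + B$2$2*n2) - heis_section B u v n1 n2
     - heis_section B u v (- n1) (- n2) = - det B * n1 * n2"
  by (simp add: heis_section_def det_2 power2_eq_square field_simps)

lemma heis_lat_subgroup:
  assumes "int_multiple \<eta> (det B)"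
  shows "heis_subgroup (heis_lat B \<eta> u v)"
  unfolding heis_subgroup_def
proof (intro conjI ballI)
  show "heis_one \<in> heis_lat B \<eta> u v"
    using heis_latI[of \<eta> 0 B u v 0 0] by (simp add: heis_one_def heis_section_def)
next
  fix g h assume "g \<in> heis_lat B \<eta> u v" "h \<in> heis_lat B \<eta> u v"
  then obtain n1 n2 p1 p2 :: int and z w
    where g: "g = (B$1$1*n1 + B$1$2*n2, B$2$1*n1 + B$2$2*n2, z)" "int_multiple \<eta> (z - heis_section B u v n1 n2)"
      and h: "h = (B$1$1*p1 + B$1$2*p2, B$2$1*p1 + B$2$2*p2, w)" "int_multiple \<eta> (w - heis_section B u v p1 p2)"
    by (metis heis_latE)
  have "int_multiple \<eta> ((z - heis_section B u v n1 n2) + (w - heis_section B u v p1 p2) + det B * of_int (- p1 * n2))"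
    using g(2) h(2) assms by (intro int_multiple_add int_multiple_mult_Ints) auto
  also have "(z - heis_section B u v n1 n2) + (w - heis_section B u v p1 p2) + det B * of_int (- p1 * n2)
     = z + w + (B$1$1*n1 + B$1$2*n2) * (B$2$1*p1 + B$2$2*p2) - heis_section B u v (of_int (n1+p1)) (of_int (n2+p2))"
    using heis_section_cocycle[of B u v n1 n2 p1 p2] by (simp add: algebra_simps)
  finally show "heis_mult g h \<in> heis_lat B \<eta> u v"
    using heis_latI[of \<eta> _ B u v "n1 + p1" "n2 + p2"] unfolding g(1) h(1)
    by (simp add: heis_mult_def algebra_simps)
next
  fix g assume "g \<in> heis_lat B \<eta> u v"
  then obtain n1 n2 :: int and z where g: "g = (B$1$1*n1 + B$1$2*n2, B$2$1*n1 + B$2$2*n2, z)"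
    "int_multiple \<eta> (z - heis_section B u v n1 n2)" by (rule heis_latE)
  have "int_multiple \<eta> (- (z - heis_section B u v n1 n2) + det B * of_int (- n1 * n2))"
    using g(2) assms by (intro int_multiple_add int_multiple_minus int_multiple_mult_Ints) auto
  also have "- (z - heis_section B u v n1 n2) + det B * of_int (- n1 * n2) =
     (B$1$1*n1 + B$1$2*n2) * (B$2$1*n1 + B$2$2*n2) - z - heis_section B u v (of_int (- n1)) (of_int (- n2))"
    using heis_section_minus[of B n1 n2 u v] by (simp add: algebra_simps)
  finally show "heis_inv g \<in> heis_lat B \<eta> u v"
    using heis_latI[of \<eta> _ B u v "- n1" "- n2"] unfolding g(1)
    by (simp add: heis_inv_def algebra_simps)
qed

lemma dist_heis_components:
  fixes g h :: heis
  shows "\<bar>fst h - fst g\<bar> \<le> dist h g" "\<bar>fst (snd h) - fst (snd g)\<bar> \<le> dist h g"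
    "\<bar>snd (snd h) - snd (snd g)\<bar> \<le> dist h g"
  using dist_fst_le[of h g] dist_snd_le[of h g] dist_fst_le[of "snd h" "snd g"]
    dist_snd_le[of "snd h" "snd g"]
  by (auto simp: dist_real_def)

lemma cramer_coordinate_close:
  fixes d a b e y x y' x' p n :: real
  assumes "d * p = a * y - b * y'" "d * n = a * x - b * x'"
    and "\<bar>y - x\<bar> < e" "\<bar>y' - x'\<bar> < e" "e \<le> \<bar>d\<bar> / (1 + \<bar>a\<bar> + \<bar>b\<bar>)" "d \<noteq> 0"
  shows "\<bar>p - n\<bar> < 1"
proof -
  have "d * (p - n) = a * (y - x) - b * (y' - x')"
    using assms(1,2) by (simp add: algebra_simps)
  then have "\<bar>d\<bar> * \<bar>p - n\<bar> = \<bar>a * (y - x) - b * (y' - x')\<bar>"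
    by (metis abs_mult)
  also have "\<dots> \<le> \<bar>a\<bar> * \<bar>y - x\<bar> + \<bar>b\<bar> * \<bar>y' - x'\<bar>" by (metis abs_mult abs_triangle_ineq4)
  also have "\<dots> \<le> (\<bar>a\<bar> + \<bar>b\<bar>) * e"
    using assms(3,4) by (simp add: distrib_right add_mono mult_left_mono)
  also have "\<dots> \<le> (\<bar>a\<bar> + \<bar>b\<bar>) * (\<bar>d\<bar> / (1 + \<bar>a\<bar> + \<bar>b\<bar>))"
    using assms(5) by (intro mult_left_mono) auto
  also have "\<dots> < \<bar>d\<bar>" using assms(6) by (simp add: field_simps)
  finally show ?thesis using assms(6) by (simp add: mult_less_cancel_left2)
qed

lemma heis_lat_discrete:
  assumes "det B \<noteq> 0" "\<eta> > 0"
  shows "heis_discrete (heis_lat B \<eta> u v)"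
  unfolding heis_discrete_def
proof
  fix g assume "g \<in> heis_lat B \<eta> u v"
  then obtain n1 n2 :: int and z where g: "g = (B$1$1*n1 + B$1$2*n2, B$2$1*n1 + B$2$2*n2, z)"
    "int_multiple \<eta> (z - heis_section B u v n1 n2)" by (rule heis_latE)
  define e where "e = min \<eta> (min (\<bar>det B\<bar> / (1 + \<bar>B$2$2\<bar> + \<bar>B$1$2\<bar>)) (\<bar>det B\<bar> / (1 + \<bar>B$1$1\<bar> + \<bar>B$2$1\<bar>)))"
  have "e > 0" using assms unfolding e_def by (simp add: add_pos_nonneg)
  moreover have "h = g" if hG: "h \<in> heis_lat B \<eta> u v" and hd: "dist h g < e" for h
  proof -
    obtain p1 p2 :: int and w where h: "h = (B$1$1*p1 + B$1$2*p2, B$2$1*p1 + B$2$2*p2, w)"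
      "int_multiple \<eta> (w - heis_section B u v p1 p2)" using hG by (rule heis_latE)
    let ?x1 = "B$1$1*n1 + B$1$2*n2" and ?x2 = "B$2$1*n1 + B$2$2*n2"
    let ?y1 = "B$1$1*p1 + B$1$2*p2" and ?y2 = "B$2$1*p1 + B$2$2*p2"
    have close: "\<bar>?y1 - ?x1\<bar> < e" "\<bar>?y2 - ?x2\<bar> < e" "\<bar>w - z\<bar> < e"
      using dist_heis_components[of h g] hd g h by auto
    have cramer: "det B * p1 = B$2$2*?y1 - B$1$2*?y2" "det B * p2 = B$1$1*?y2 - B$2$1*?y1"
      "det B * n1 = B$2$2*?x1 - B$1$2*?x2" "det B * n2 = B$1$1*?x2 - B$2$1*?x1"
      by (simp_all add: det_2 algebra_simps)
    have "\<bar>of_int p1 - of_int n1\<bar> < (1::real)"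
      by (rule cramer_coordinate_close[OF cramer(1,3) close(1,2)]) (use assms in \<open>auto simp: e_def min_le_iff_disj\<close>)
    moreover have "\<bar>of_int p2 - of_int n2\<bar> < (1::real)"
      by (rule cramer_coordinate_close[OF cramer(2,4) close(2,1)]) (use assms in \<open>auto simp: e_def min_le_iff_disj\<close>)
    ultimately have p: "p1 = n1" "p2 = n2" by linarith+
    have "int_multiple \<eta> ((w - heis_section B u v p1 p2) - (z - heis_section B u v n1 n2))"
      using h(2) g(2) by (rule int_multiple_diff)
    moreover have "\<bar>(w - heis_section B u v p1 p2) - (z - heis_section B u v n1 n2)\<bar> < \<eta>"
      using close(3) p by (simp add: e_def)
    ultimately have "w = z" using int_multiple_abs_less p by fastforce
    then show "h = g" using g h p by simp
  qed
  ultimately show "\<exists>e>0. \<forall>h\<in>heis_lat B \<eta> u v. dist h g < e \<longrightarrow> h = g" by blast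
qed

text \<open>The first two conditions say \<open>B\<^sup>-\<^sup>1 (x\<^sub>1, x\<^sub>2) \<in> [0,1)\<^sup>2\<close>, by Cramer's rule.\<close>

definition heis_box :: "real^2^2 \<Rightarrow> real \<Rightarrow> heis set" where
  "heis_box B \<eta> = {g.
      0 \<le> (B$2$2 * fst g - B$1$2 * fst (snd g)) / det B \<and> (B$2$2 * fst g - B$1$2 * fst (snd g)) / det B < 1 \<and>
      0 \<le> (B$1$1 * fst (snd g) - B$2$1 * fst g) / det B \<and> (B$1$1 * fst (snd g) - B$2$1 * fst g) / det B < 1 \<and>
      0 \<le> snd (snd g) \<and> snd (snd g) < \<eta>}"

lemma heis_box_borel:
  assumes "det B \<noteq> 0"
  shows "heis_box B \<eta> \<in> sets borel"
proof -
  let ?f1 = "\<lambda>g::heis. (B$2$2 * fst g - B$1$2 * fst (snd g)) / det B"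
  let ?f2 = "\<lambda>g::heis. (B$1$1 * fst (snd g) - B$2$1 * fst g) / det B"
  have "heis_box B \<eta> = {g. 0 \<le> ?f1 g \<and> 0 \<le> ?f2 g \<and> 0 \<le> snd (snd g)} \<inter>
      {g. ?f1 g < 1 \<and> ?f2 g < 1 \<and> snd (snd g) < \<eta>}"
    unfolding heis_box_def by auto
  also have "\<dots> \<in> sets borel"
    using assms by (intro sets.Int[OF borel_closed borel_open] closed_Collect_conj closed_Collect_le
        open_Collect_conj open_Collect_less continuous_intros) auto
  finally show ?thesis .
qed

lemma heis_box_bounded:
  assumes "det B \<noteq> 0"
  shows "bounded (heis_box B \<eta>)"
  unfolding bounded_iff
proof (intro exI ballI)
  fix g assume "g \<in> heis_box B \<eta>"
  then obtain t1 t2 where t: "0 \<le> t1" "t1 < 1" "0 \<le> t2" "t2 < 1" "0 \<le> snd (snd g)" "snd (snd g) < \<eta>"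
    "t1 = (B$2$2 * fst g - B$1$2 * fst (snd g)) / det B" "t2 = (B$1$1 * fst (snd g) - B$2$1 * fst g) / det B"
    unfolding heis_box_def by auto
  have dt: "det B * t1 = B$2$2 * fst g - B$1$2 * fst (snd g)" "det B * t2 = B$1$1 * fst (snd g) - B$2$1 * fst g"
    using assms unfolding t(7,8) by simp_all
  have "det B * (B$1$1 * t1 + B$1$2 * t2) = B$1$1 * (det B * t1) + B$1$2 * (det B * t2)"
    "det B * (B$2$1 * t1 + B$2$2 * t2) = B$2$1 * (det B * t1) + B$2$2 * (det B * t2)"
    by (simp_all add: algebra_simps)
  then have "det B * (B$1$1 * t1 + B$1$2 * t2) = det B * fst g"
    "det B * (B$2$1 * t1 + B$2$2 * t2) = det B * fst (snd g)"
    unfolding dt by (simp_all add: det_2 algebra_simps)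
  then have cramer: "fst g = B$1$1 * t1 + B$1$2 * t2" "fst (snd g) = B$2$1 * t1 + B$2$2 * t2"
    using assms by simp_all
  have "norm g \<le> norm (fst g) + norm (snd g)" by (metis norm_Pair_le prod.collapse)
  also have "norm (snd g) \<le> norm (fst (snd g)) + norm (snd (snd g))" by (metis norm_Pair_le prod.collapse)
  finally have "norm g \<le> \<bar>fst g\<bar> + \<bar>fst (snd g)\<bar> + \<bar>snd (snd g)\<bar>" by simp
  also have "\<dots> \<le> (\<bar>B$1$1\<bar> + \<bar>B$1$2\<bar>) + (\<bar>B$2$1\<bar> + \<bar>B$2$2\<bar>) + \<eta>"
    unfolding cramer using t(1-6)
    by (intro add_mono order_trans[OF abs_triangle_ineq]) (simp_all add: abs_mult mult_left_le)
  finally show "norm g \<le> (\<bar>B$1$1\<bar> + \<bar>B$1$2\<bar>) + (\<bar>B$2$1\<bar> + \<bar>B$2$2\<bar>) + \<eta>" .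
qed

lemma heis_inv_mult_in_box_iff:
  fixes p1 p2 :: int
  assumes "det B \<noteq> 0"
  defines "X1 \<equiv> B$1$1 * p1 + B$1$2 * p2" and "X2 \<equiv> B$2$1 * p1 + B$2$2 * p2"
  shows "heis_mult (heis_inv (X1, X2, z)) (y1, y2, w) \<in> heis_box B \<eta> \<longleftrightarrow>
    \<lfloor>(B$2$2 * y1 - B$1$2 * y2) / det B\<rfloor> = p1 \<and> \<lfloor>(B$1$1 * y2 - B$2$1 * y1) / det B\<rfloor> = p2 \<and>
    X1 * X2 + w - X1 * y2 - \<eta> < z \<and> z \<le> X1 * X2 + w - X1 * y2"
proof -
  have "heis_mult (heis_inv (X1, X2, z)) (y1, y2, w) = (y1 - X1, y2 - X2, X1 * X2 + w - X1 * y2 - z)"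
    by (simp add: heis_mult_def heis_inv_def algebra_simps)
  moreover have "(B$2$2 * (y1 - X1) - B$1$2 * (y2 - X2)) / det B = (B$2$2 * y1 - B$1$2 * y2) / det B - p1"
    "(B$1$1 * (y2 - X2) - B$2$1 * (y1 - X1)) / det B = (B$1$1 * y2 - B$2$1 * y1) / det B - p2"
    using assms(1) unfolding X1_def X2_def by (simp_all add: det_2 field_simps)
  ultimately show ?thesis
    unfolding heis_box_def by (auto simp: floor_eq_iff)
qed

lemma heis_lat_finite_covolume:
  assumes "det B \<noteq> 0" "\<eta> > 0"
  shows "heis_finite_covolume (heis_lat B \<eta> u v)"
proof -
  have unique: "\<exists>!\<gamma>. \<gamma> \<in> heis_lat B \<eta> u v \<and> heis_mult (heis_inv \<gamma>) g \<in> heis_box B \<eta>" for g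
  proof -
    obtain y1 y2 w where g: "g = (y1, y2, w)" by (cases g)
    define n1 where "n1 = \<lfloor>(B$2$2 * y1 - B$1$2 * y2) / det B\<rfloor>"
    define n2 where "n2 = \<lfloor>(B$1$1 * y2 - B$2$1 * y1) / det B\<rfloor>"
    define X1 where "X1 = B$1$1 * n1 + B$1$2 * n2"
    define X2 where "X2 = B$2$1 * n1 + B$2$2 * n2"
    let ?P = "\<lambda>z. int_multiple \<eta> (z - heis_section B u v n1 n2) \<and>
      X1 * X2 + w - X1 * y2 - \<eta> < z \<and> z \<le> X1 * X2 + w - X1 * y2"
    have ex1: "\<exists>!z. ?P z" by (rule ex1_int_multiple_between[OF assms(2)])
    then obtain z where z: "?P z" by blast
    show ?thesis
    proof (rule ex1I[of _ "(X1, X2, z)"])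
      have "(X1, X2, z) \<in> heis_lat B \<eta> u v"
        using z heis_latI[of \<eta> z B u v n1 n2] unfolding X1_def X2_def by blast
      moreover have "heis_mult (heis_inv (X1, X2, z)) g \<in> heis_box B \<eta>"
        using z unfolding g X1_def X2_def heis_inv_mult_in_box_iff[OF assms(1)] n1_def n2_def by blast
      ultimately show "(X1, X2, z) \<in> heis_lat B \<eta> u v \<and> heis_mult (heis_inv (X1, X2, z)) g \<in> heis_box B \<eta>" ..
    next
      fix \<gamma> assume \<gamma>: "\<gamma> \<in> heis_lat B \<eta> u v \<and> heis_mult (heis_inv \<gamma>) g \<in> heis_box B \<eta>"
      then obtain p1 p2 :: int and z' where \<gamma>_eq: "\<gamma> = (B$1$1*p1 + B$1$2*p2, B$2$1*p1 + B$2$2*p2, z')"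
        "int_multiple \<eta> (z' - heis_section B u v p1 p2)" by (auto elim: heis_latE)
      have box: "heis_mult (heis_inv (B$1$1*p1 + B$1$2*p2, B$2$1*p1 + B$2$2*p2, z')) (y1, y2, w) \<in> heis_box B \<eta>"
        using \<gamma> unfolding \<gamma>_eq(1) g by blast
      have p: "p1 = n1" "p2 = n2"
        using box unfolding heis_inv_mult_in_box_iff[OF assms(1)] n1_def n2_def by simp_all
      have "?P z'"
        using box \<gamma>_eq(2) unfolding heis_inv_mult_in_box_iff[OF assms(1)] p X1_def X2_def by blast
      then show "\<gamma> = (X1, X2, z)" using ex1 z \<gamma>_eq(1) unfolding p X1_def X2_def by blast
    qed
  qed
  have "emeasure lborel (heis_box B \<eta>) < \<infinity>"
    using emeasure_bounded_finite heis_box_bounded[OF assms(1)] by blast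
  then show ?thesis
    unfolding heis_finite_covolume_def using unique heis_box_borel[OF assms(1), of \<eta>]
    by (intro exI[of _ "heis_box B \<eta>"]) simp
qed

lemma heis_lat_lattice:
  assumes "det B \<noteq> 0" "\<eta> > 0" "int_multiple \<eta> (det B)"
  shows "heis_lattice (heis_lat B \<eta> u v)"
  unfolding heis_lattice_def
  using heis_lat_subgroup heis_lat_discrete heis_lat_finite_covolume assms by blast

lemma heis_p_Pair: "heis_p (a, b, c) = vector [a, b]"
  unfolding heis_p_def by simp

lemma heis_p_heis_lat: "heis_p ` heis_lat B \<eta> u v = lattice_of B"
proof (intro equalityI subsetI)
  fix y assume "y \<in> heis_p ` heis_lat B \<eta> u v"
  then obtain n1 n2 :: int and z where "y = heis_p (B$1$1*n1 + B$1$2*n2, B$2$1*n1 + B$2$2*n2, z)"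
    by (auto elim: heis_latE)
  then have "y = B *v vector [of_int n1, of_int n2]"
    unfolding heis_p_Pair vec_2_eq_iff matrix_vector_mult_2 by simp
  moreover have "vector [of_int n1, of_int n2] \<in> (int_vecs :: (real^2) set)"
    unfolding int_vecs_2_iff by simp
  ultimately show "y \<in> lattice_of B" unfolding lattice_of_def by blast
next
  fix y assume "y \<in> lattice_of B"
  then obtain x where x: "x \<in> int_vecs" "y = B *v x" unfolding lattice_of_def by auto
  obtain n1 n2 where n: "x = vector [of_int n1, of_int n2]" using x(1) by (rule int_vecs_2_cases)
  have "(B$1$1 * of_int n1 + B$1$2 * of_int n2, B$2$1 * of_int n1 + B$2$2 * of_int n2,
      heis_section B u v (of_int n1) (of_int n2)) \<in> heis_lat B \<eta> u v"
    by (rule heis_latI) simp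
  moreover have "y = heis_p (B$1$1 * of_int n1 + B$1$2 * of_int n2, B$2$1 * of_int n1 + B$2$2 * of_int n2,
      heis_section B u v (of_int n1) (of_int n2))"
    unfolding x(2) n heis_p_Pair vec_2_eq_iff matrix_vector_mult_2 by simp
  ultimately show "y \<in> heis_p ` heis_lat B \<eta> u v" by blast
qed

lemma heis_lat_centre:
  assumes "det B \<noteq> 0"
  shows "heis_lat B \<eta> u v \<inter> range heis_c = {heis_c (of_int m * \<eta>) | m. True}"
proof (intro equalityI subsetI)
  fix g assume "g \<in> heis_lat B \<eta> u v \<inter> range heis_c"
  then obtain t where t: "g = heis_c t" "g \<in> heis_lat B \<eta> u v" by auto
  obtain n1 n2 :: int and z where g: "g = (B$1$1*n1 + B$1$2*n2, B$2$1*n1 + B$2$2*n2, z)"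
    "int_multiple \<eta> (z - heis_section B u v n1 n2)" using t(2) by (rule heis_latE)
  have e: "B$1$1*n1 + B$1$2*n2 = 0" "B$2$1*n1 + B$2$2*n2 = 0" "z = t"
    using t(1) g(1) by (auto simp: heis_c_def)
  have "det B * n1 = B$2$2*(B$1$1*n1 + B$1$2*n2) - B$1$2*(B$2$1*n1 + B$2$2*n2)"
    "det B * n2 = B$1$1*(B$2$1*n1 + B$2$2*n2) - B$2$1*(B$1$1*n1 + B$1$2*n2)"
    by (simp_all add: det_2 algebra_simps)
  then have "det B * n1 = 0" "det B * n2 = 0" unfolding e(1,2) by simp_all
  then have "n1 = 0" "n2 = 0" using assms by simp_all
  then have "int_multiple \<eta> t" using g(2) e(3) by (simp add: heis_section_def)
  then show "g \<in> {heis_c (of_int m * \<eta>) | m. True}" using t(1) by (auto elim: int_multipleE)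
next
  fix g assume "g \<in> {heis_c (of_int m * \<eta>) | m. True}"
  then obtain m where m: "g = heis_c (of_int m * \<eta>)" by auto
  have "(B$1$1 * of_int 0 + B$1$2 * of_int 0, B$2$1 * of_int 0 + B$2$2 * of_int 0, of_int m * \<eta>)
     \<in> heis_lat B \<eta> u v"
    by (rule heis_latI) (simp add: heis_section_def)
  then show "g \<in> heis_lat B \<eta> u v \<inter> range heis_c" using m by (simp add: heis_c_def)
qed

lemma xi_lat_eqI:
  assumes "\<eta> > 0" "L \<inter> range heis_c = {heis_c (of_int m * \<eta>) | m. True}"
  shows "xi_lat L = \<eta>"
  unfolding xi_lat_def
proof (rule the_equality)
  show "\<eta> > 0 \<and> L \<inter> range heis_c = {heis_c (of_int m * \<eta>) | m. True}" using assms by simp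
next
  fix x assume x: "x > 0 \<and> L \<inter> range heis_c = {heis_c (of_int m * x) | m. True}"
  have inj: "heis_c a = heis_c b \<longleftrightarrow> a = b" for a b by (simp add: heis_c_def)
  have "heis_c (of_int 1 * x) \<in> {heis_c (of_int m * \<eta>) | m. True}" using x assms(2) by blast
  then obtain k :: int where k: "x = k * \<eta>" using inj by auto
  have "heis_c (of_int 1 * \<eta>) \<in> {heis_c (of_int m * x) | m. True}" using x assms(2) by blast
  then obtain l :: int where l: "\<eta> = l * x" using inj by auto
  note kl = k l
  have "k > 0" using k x assms(1) by (simp add: zero_less_mult_iff)
  have "l > 0" using l x assms(1) by (simp add: zero_less_mult_iff)
  have "\<eta> = of_int (l * k) * \<eta>" using kl by (simp add: mult.assoc)
  then have "real_of_int (l * k) = 1" using assms(1) by simp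
  then have "l * k = 1" by linarith
  then have "k = 1" using \<open>k > 0\<close> \<open>l > 0\<close> by (simp add: zmult_eq_1_iff)
  then show "x = \<eta>" using kl by simp
qed

lemma triangular_Ints: "real_of_int p * (real_of_int p - 1) / 2 \<in> \<int>"
proof -
  have "even (p * (p - 1))" by simp
  then obtain q where "p * (p - 1) = 2 * q" by (rule dvdE)
  then have "real_of_int p * (real_of_int p - 1) = 2 * of_int q"
    by (metis of_int_1 of_int_diff of_int_mult of_int_numeral)
  then show ?thesis by simp
qed

lemma heis_section_refine:
  fixes B C :: "real^2^2" and u v :: real
  defines "u' \<equiv> heis_section B u v (C$1$1) (C$2$1) - heis_section (B ** C) 0 0 1 0"
    and "v' \<equiv> heis_section B u v (C$1$2) (C$2$2) - heis_section (B ** C) 0 0 0 1"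
  shows "heis_section (B ** C) u' v' p1 p2
      - heis_section B u v (C$1$1 * p1 + C$1$2 * p2) (C$2$1 * p1 + C$2$2 * p2)
    = det B * (- C$1$2 * C$2$1 * p1 * p2 - C$1$1 * C$2$1 * (p1 * (p1 - 1) / 2)
        - C$1$2 * C$2$2 * (p2 * (p2 - 1) / 2))"
  unfolding u'_def v'_def heis_section_def matrix_matrix_mult_2 det_2
  by (simp add: power2_eq_square field_simps)

lemma heis_lat_mono:
  fixes B C :: "real^2^2" and u v :: real
  assumes C: "int_matrix C" and "int_multiple \<eta> (det B)" "int_multiple \<eta> \<eta>'"
  defines "u' \<equiv> heis_section B u v (C$1$1) (C$2$1) - heis_section (B ** C) 0 0 1 0"
    and "v' \<equiv> heis_section B u v (C$1$2) (C$2$2) - heis_section (B ** C) 0 0 0 1"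
  shows "heis_lat (B ** C) \<eta>' u' v' \<subseteq> heis_lat B \<eta> u v"
proof
  fix g assume "g \<in> heis_lat (B ** C) \<eta>' u' v'"
  then obtain p1 p2 :: int and z
    where g: "g = ((B**C)$1$1*p1 + (B**C)$1$2*p2, (B**C)$2$1*p1 + (B**C)$2$2*p2, z)"
      "int_multiple \<eta>' (z - heis_section (B**C) u' v' p1 p2)" by (rule heis_latE)
  obtain c11 c12 c21 c22 :: int
    where c: "C$1$1 = c11" "C$1$2 = c12" "C$2$1 = c21" "C$2$2 = c22"
    using C unfolding int_matrix_def by (metis Ints_cases)
  define m1 where "m1 = c11 * p1 + c12 * p2"
  define m2 where "m2 = c21 * p1 + c22 * p2"
  have "int_multiple \<eta> (z - heis_section (B**C) u' v' p1 p2)"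
    using g(2) assms(3) int_multiple_trans by blast
  moreover have "int_multiple \<eta> (heis_section (B ** C) u' v' p1 p2
      - heis_section B u v (C$1$1 * p1 + C$1$2 * p2) (C$2$1 * p1 + C$2$2 * p2))"
    unfolding u'_def v'_def heis_section_refine
    by (intro int_multiple_mult_Ints assms(2) Ints_diff Ints_minus Ints_mult triangular_Ints)
      (simp_all add: c)
  ultimately have "int_multiple \<eta> (z - heis_section B u v (of_int m1) (of_int m2))"
    unfolding m1_def m2_def c using int_multiple_add by fastforce
  then have "(B$1$1 * of_int m1 + B$1$2 * of_int m2, B$2$1 * of_int m1 + B$2$2 * of_int m2, z)
      \<in> heis_lat B \<eta> u v"
    by (rule heis_latI)
  moreover have "g = (B$1$1 * of_int m1 + B$1$2 * of_int m2, B$2$1 * of_int m1 + B$2$2 * of_int m2, z)"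
    unfolding g(1) matrix_matrix_mult_2 m1_def m2_def c by (simp add: algebra_simps)
  ultimately show "g \<in> heis_lat B \<eta> u v" by simp
qed

lemma heis_lat_chain:
  fixes B :: "nat \<Rightarrow> real^2^2" and \<eta> :: "nat \<Rightarrow> real"
  assumes det: "\<And>j. det (B j) \<noteq> 0" and pos: "\<And>j. \<eta> j > 0"
    and det_mult: "\<And>j. int_multiple (\<eta> j) (det (B j))"
    and refine: "\<And>j. \<exists>C. int_matrix C \<and> B (Suc j) = B j ** C"
    and \<eta>_mult: "\<And>j. int_multiple (\<eta> j) (\<eta> (Suc j))"
  obtains \<Gamma> :: "nat \<Rightarrow> heis set"
  where "\<And>j. heis_lattice (\<Gamma> j)" "\<And>j. \<Gamma> (Suc j) \<subseteq> \<Gamma> j"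
    "\<And>j. heis_p ` \<Gamma> j = lattice_of (B j)"
    "\<And>j. \<Gamma> j \<inter> range heis_c = {heis_c (of_int m * \<eta> j) | m. True}"
proof -
  obtain C where C: "\<And>j. int_matrix (C j)" "\<And>j. B (Suc j) = B j ** C j"
    using refine by metis
  define uv where "uv = rec_nat (0, 0) (\<lambda>j (u, v).
      (heis_section (B j) u v (C j$1$1) (C j$2$1) - heis_section (B j ** C j) 0 0 1 0,
       heis_section (B j) u v (C j$1$2) (C j$2$2) - heis_section (B j ** C j) 0 0 0 1))"
  define \<Gamma> where "\<Gamma> j = heis_lat (B j) (\<eta> j) (fst (uv j)) (snd (uv j))" for j
  show thesis
  proof
    show "heis_lattice (\<Gamma> j)" for j
      unfolding \<Gamma>_def by (rule heis_lat_lattice[OF det pos det_mult])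
    show "\<Gamma> (Suc j) \<subseteq> \<Gamma> j" for j
      unfolding \<Gamma>_def C(2) uv_def
      by (simp add: case_prod_beta heis_lat_mono[OF C(1) det_mult \<eta>_mult])
    show "heis_p ` \<Gamma> j = lattice_of (B j)" for j
      unfolding \<Gamma>_def by (rule heis_p_heis_lat)
    show "\<Gamma> j \<inter> range heis_c = {heis_c (of_int m * \<eta> j) | m. True}" for j
      unfolding \<Gamma>_def by (rule heis_lat_centre[OF det])
  qed
qed

section \<open>Off-rational subgroups\<close>

lemma add_subgroup_int_multiples:
  fixes G :: "'a::ab_group_add set" and f :: "int \<Rightarrow> 'a"
  assumes G: "add_subgroup G" and x: "x \<in> G"
    and f: "f 0 = 0" "\<And>i. f (i + 1) = f i + x" "\<And>i. f (i - 1) = f i + - x"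
  shows "f k \<in> G"
proof (induction k rule: int_induct[where k = 0])
  case base then show ?case using G f(1) unfolding add_subgroup_def by simp
next
  case (step1 i) then show ?case using G f(2) x unfolding add_subgroup_def by simp
next
  case (step2 i) then show ?case using G f(3) x unfolding add_subgroup_def by metis
qed

lemma add_subgroup_linear_image:
  assumes "linear f" "add_subgroup Q"
  shows "add_subgroup (f ` Q)"
  unfolding add_subgroup_def
proof (intro conjI ballI)
  have Q: "0 \<in> Q" "\<And>p q. p \<in> Q \<Longrightarrow> q \<in> Q \<Longrightarrow> p + q \<in> Q" "\<And>p. p \<in> Q \<Longrightarrow> - p \<in> Q"
    using assms(2) unfolding add_subgroup_def by auto
  show "0 \<in> f ` Q" using Q(1) linear_0[OF assms(1)] by force
  fix x y assume "x \<in> f ` Q" "y \<in> f ` Q"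
  then obtain p q where "p \<in> Q" "q \<in> Q" "x = f p" "y = f q" by blast
  then show "x + y \<in> f ` Q" "- x \<in> f ` Q"
    using Q linear_add[OF assms(1), of p q] linear_neg[OF assms(1), of p] by force+
qed

lemma int_add_subgroup_cyclic:
  fixes G :: "int set"
  assumes G: "add_subgroup G" and N: "N \<in> G" "N > 0"
  shows "\<exists>a>0. G = {k * a | k. True}"
proof -
  define a where "a = int (LEAST n::nat. int n \<in> G \<and> 0 < n)"
  have "\<exists>n::nat. int n \<in> G \<and> 0 < n" using N by (intro exI[of _ "nat N"]) simp
  then have "int (LEAST n::nat. int n \<in> G \<and> 0 < n) \<in> G \<and> 0 < (LEAST n::nat. int n \<in> G \<and> 0 < n)"
    by (rule LeastI_ex)
  then have a: "a \<in> G" "0 < a" unfolding a_def by auto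
  have least: "a \<le> b" if "b \<in> G" "0 < b" for b
  proof -
    have "(LEAST n::nat. int n \<in> G \<and> 0 < n) \<le> nat b" by (rule Least_le) (use that in auto)
    then show ?thesis unfolding a_def using that by linarith
  qed
  have mult: "k * a \<in> G" for k
    by (rule add_subgroup_int_multiples[OF G a(1)]) (auto simp: algebra_simps)
  have "x \<in> {k * a | k. True}" if x: "x \<in> G" for x
  proof -
    have "x + (- (x div a)) * a \<in> G" using G x mult[of "- (x div a)"] unfolding add_subgroup_def
      by blast
    then have "x mod a \<in> G" using minus_div_mult_eq_mod[of x a] by simp
    moreover have "0 \<le> x mod a" "x mod a < a" using a(2) by simp_all
    ultimately have "x mod a = 0" using least[of "x mod a"] by linarith
    then show ?thesis using div_mult_mod_eq[of x a] by auto
  qed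
  then have "G = {k * a | k. True}" using mult by blast
  then show ?thesis using a(2) by blast
qed

lemma int_pair_add_subgroup_triangular:
  fixes H :: "(int \<times> int) set"
  assumes H: "add_subgroup H" and N: "N > 0" "(N, 0) \<in> H" "(0, N) \<in> H"
  shows "\<exists>a b c. a > 0 \<and> b > 0 \<and> H = {(k * a, k * c + l * b) | k l. True}"
proof -
  have sg: "0 \<in> H" "\<And>x y. x \<in> H \<Longrightarrow> y \<in> H \<Longrightarrow> x + y \<in> H" "\<And>x. x \<in> H \<Longrightarrow> - x \<in> H"
    using H unfolding add_subgroup_def by auto
  have "add_subgroup (fst ` H)" unfolding add_subgroup_def
  proof (intro conjI ballI)
    show "0 \<in> fst ` H" using sg(1) by (metis fst_zero image_eqI)
    fix x y assume "x \<in> fst ` H" "y \<in> fst ` H"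
    then obtain p q where "p \<in> H" "q \<in> H" "x = fst p" "y = fst q" by auto
    then show "x + y \<in> fst ` H" "- x \<in> fst ` H"
      using sg(2)[of p q] sg(3)[of p] by (metis fst_add fst_uminus image_eqI)+
  qed
  moreover have "N \<in> fst ` H" using N(2) by force
  ultimately obtain a where a: "a > 0" "fst ` H = {k * a | k. True}"
    using int_add_subgroup_cyclic N(1) by blast
  define K where "K = {y. (0, y) \<in> H}"
  have "add_subgroup K" unfolding add_subgroup_def K_def
    using sg(1) sg(2)[of "(0, _)" "(0, _)"] sg(3)[of "(0, _)"] by (simp add: zero_prod_def)
  moreover have "N \<in> K" using N(3) K_def by simp
  ultimately obtain b where b: "b > 0" "K = {k * b | k. True}"
    using int_add_subgroup_cyclic N(1) by blast
  have "a \<in> fst ` H" using a(2) by force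
  then obtain c where c: "(a, c) \<in> H" by force
  have mult_ac: "(k * a, k * c) \<in> H" for k
    by (rule add_subgroup_int_multiples[OF H c]) (auto simp: algebra_simps zero_prod_def)
  have "(0, b) \<in> H" using b(2) K_def by force
  then have mult_b: "(0, l * b) \<in> H" for l
    by (rule add_subgroup_int_multiples[OF H]) (auto simp: algebra_simps zero_prod_def)
  have "H = {(k * a, k * c + l * b) | k l. True}"
  proof (intro equalityI subsetI)
    fix p assume p: "p \<in> H"
    obtain x y where xy: "p = (x, y)" by force
    have "x \<in> fst ` H" using p xy by force
    then obtain k where k: "x = k * a" using a(2) by auto
    have "(x, y) + - (k * a, k * c) \<in> H" using sg(2)[OF _ sg(3)[OF mult_ac]] p xy by blast
    then have "y - k * c \<in> K" unfolding K_def using k by simp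
    then obtain l where "y - k * c = l * b" using b(2) by auto
    then have "p = (k * a, k * c + l * b)" using xy k by simp
    then show "p \<in> {(k * a, k * c + l * b) | k l. True}" by blast
  next
    fix p assume "p \<in> {(k * a, k * c + l * b) | k l. True}"
    then obtain k l where "p = (k * a, k * c) + (0, l * b)" by auto
    then show "p \<in> H" using sg(2)[OF mult_ac mult_b] by simp
  qed
  then show ?thesis using a(1) b(1) by blast
qed

lemma Rats_fact_mult_Ints:
  assumes "(x::real) \<in> \<rat>"
  shows "\<exists>n0. \<forall>n\<ge>n0. of_nat (fact n) * x \<in> \<int>"
proof -
  obtain a b where ab: "b > 0" "x = of_int a / of_int b" using assms by (rule Rats_cases')
  have "of_nat (fact n) * x \<in> \<int>" if n: "nat b \<le> n" for n
  proof -
    have "nat b dvd fact n" by (rule dvd_fact) (use ab n in auto)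
    then obtain r where "fact n = nat b * r" by (auto elim: dvdE)
    then have "of_nat (fact n) * x = of_nat r * of_int a" using ab by (simp add: of_nat_mult)
    then show ?thesis by simp
  qed
  then show ?thesis by blast
qed

lemma fact_mult_Ints_Suc:
  assumes "of_nat (fact n) * (x::real) \<in> \<int>"
  shows "of_nat (fact (Suc n)) * x \<in> \<int>"
proof -
  have "of_nat (Suc n) * (of_nat (fact n) * x) \<in> \<int>" by (rule Ints_mult[OF Ints_of_nat assms])
  moreover have "of_nat (fact (Suc n)) * x = of_nat (Suc n) * (of_nat (fact n) * x)"
    by (simp only: fact_Suc of_nat_mult mult.assoc) simp
  ultimately show ?thesis by (simp only:)
qed

lemma vector_2_algebra:
  "vector [a, b] + vector [c, d] = (vector [a + c, b + d] :: real^2)"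
  "- vector [a, b] = (vector [- a, - b] :: real^2)"
  "vector [0, 0] = (0 :: real^2)"
  "r *\<^sub>R vector [a, b] = (vector [r * a, r * b] :: real^2)"
  by (simp_all add: vec_2_eq_iff)

lemma int_vecs_subset_lattice_of_imp_int_inverse:
  fixes G :: "real^'n^'n"
  assumes G: "invertible G" and sub: "int_vecs \<subseteq> lattice_of G"
  shows "int_matrix (matrix_inv G)"
proof -
  have "lattice_of (mat 1 :: real^'n^'n) \<subseteq> lattice_of G"
    using sub by (simp add: lattice_of_def)
  then obtain U where U: "int_matrix U" "mat 1 = G ** U"
    using lattice_of_subset_imp_int_factor[OF G] by blast
  have "matrix_inv G = U"
    by (rule matrix_inv_unique[OF G])
      (metis U(2) matrix_inv_left[OF G] matrix_mul_assoc matrix_mul_lid matrix_mul_rid)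
  then show ?thesis using U(1) by simp
qed

text \<open>The basis comes from the Hermite normal form of the subgroup of numerators.\<close>

lemma lattice_of_bounded_denominators:
  fixes Q :: "(real^2) set" and N :: nat
  assumes Q: "add_subgroup Q" and Z: "int_vecs \<subseteq> Q" and N: "N > 0"
  shows "\<exists>G::real^2^2. invertible G \<and> lattice_of G = {v \<in> Q. \<forall>i. of_nat N * v$i \<in> \<int>}
           \<and> int_matrix (matrix_inv G)"
proof -
  define H where "H = {p :: int \<times> int. vector [of_int (fst p) / of_nat N, of_int (snd p) / of_nat N] \<in> Q}"
  have sgQ: "0 \<in> Q" "\<And>x y. x \<in> Q \<Longrightarrow> y \<in> Q \<Longrightarrow> x + y \<in> Q" "\<And>x. x \<in> Q \<Longrightarrow> - x \<in> Q"
    using Q unfolding add_subgroup_def by auto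
  have "add_subgroup H" unfolding add_subgroup_def
  proof (intro conjI ballI)
    show "0 \<in> H" using sgQ(1) unfolding H_def by (simp add: zero_prod_def vector_2_algebra)
  next
    fix p q assume "p \<in> H" "q \<in> H"
    then have "vector [of_int (fst p) / of_nat N, of_int (snd p) / of_nat N]
       + vector [of_int (fst q) / of_nat N, of_int (snd q) / of_nat N] \<in> Q"
      unfolding H_def by (intro sgQ(2)) auto
    then show "p + q \<in> H" unfolding H_def by (simp add: vector_2_algebra add_divide_distrib)
  next
    fix p assume "p \<in> H"
    then have "- vector [of_int (fst p) / of_nat N, of_int (snd p) / of_nat N] \<in> Q"
      unfolding H_def by (intro sgQ(3)) auto
    then show "- p \<in> H" unfolding H_def by (simp add: vector_2_algebra)
  qed
  moreover have "(int N, 0) \<in> H" "(0, int N) \<in> H"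
    using Z N unfolding H_def by (auto simp: subset_eq int_vecs_2_iff)
  ultimately obtain a b c where abc: "a > 0" "b > 0" "H = {(k * a, k * c + l * b) | k l. True}"
    using int_pair_add_subgroup_triangular[of H "int N"] N by auto
  define G where "G = (vector [vector [of_int a / of_nat N, 0], vector [of_int c / of_nat N, of_int b / of_nat N]] :: real^2^2)"
  have G_int: "G *v vector [of_int k, of_int l] = vector [of_int (k * a) / of_nat N, of_int (k * c + l * b) / of_nat N]" for k l
    unfolding vec_2_eq_iff matrix_vector_mult_2 G_def using N by (simp add: field_simps)
  have "det G \<noteq> 0" unfolding G_def det_2 using abc N by simp
  then have G: "invertible G" by (simp add: invertible_det_nz)
  have lat: "lattice_of G = {v \<in> Q. \<forall>i. of_nat N * v$i \<in> \<int>}"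
  proof (intro equalityI subsetI)
    fix v assume "v \<in> lattice_of G"
    then obtain k l where v: "v = G *v vector [of_int k, of_int l]"
      unfolding lattice_of_def by (auto elim: int_vecs_2_cases)
    have "(k * a, k * c + l * b) \<in> H" using abc(3) by blast
    then show "v \<in> {v \<in> Q. \<forall>i. of_nat N * v$i \<in> \<int>}"
      unfolding H_def v G_int forall_2 using N by simp
  next
    fix v assume v: "v \<in> {v \<in> Q. \<forall>i. of_nat N * v$i \<in> \<int>}"
    obtain x y where xy: "of_nat N * v$1 = of_int x" "of_nat N * v$2 = of_int y"
      using v by (metis (mono_tags, lifting) Ints_cases mem_Collect_eq)
    have vxy: "v = vector [of_int x / of_nat N, of_int y / of_nat N]"
      using xy N unfolding vec_2_eq_iff by (simp add: field_simps)
    then have "(x, y) \<in> H" unfolding H_def using v by simp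
    then obtain k l where "x = k * a" "y = k * c + l * b" using abc(3) by auto
    then have "v = G *v vector [of_int k, of_int l]" using vxy G_int by simp
    moreover have "vector [of_int k, of_int l] \<in> (int_vecs :: (real^2) set)" unfolding int_vecs_2_iff by simp
    ultimately show "v \<in> lattice_of G" unfolding lattice_of_def by blast
  qed
  have "int_vecs \<subseteq> lattice_of G"
    unfolding lat using Z by (auto simp: int_vecs_def)
  then show ?thesis using G lat int_vecs_subset_lattice_of_imp_int_inverse by blast
qed

lemma cocompact_closure_not_orthogonal:
  fixes S :: "(real^'n) set"
  assumes cc: "cocompact (closure S)" and w: "w \<noteq> 0"
  shows "\<exists>s\<in>S. w \<bullet> s \<noteq> 0"
proof (rule ccontr)
  assume "\<not> ?thesis"
  then have "closure S \<subseteq> {t. w \<bullet> t = 0}"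
    by (intro closure_minimal) (auto intro: closed_hyperplane)
  obtain K where K: "compact K" "\<And>v. \<exists>t\<in>closure S. \<exists>k\<in>K. v = t + k"
    using cc unfolding cocompact_def by blast
  obtain R where R: "\<And>k. k \<in> K \<Longrightarrow> norm k \<le> R"
    using compact_imp_bounded[OF K(1)] unfolding bounded_iff by blast
  have nw: "norm w > 0" using w by simp
  define v where "v = ((\<bar>R\<bar> + 1) / norm w) *\<^sub>R w"
  obtain t k where tk: "t \<in> closure S" "k \<in> K" "v = t + k" using K(2) by blast
  have "w \<bullet> t = 0" using tk(1) \<open>closure S \<subseteq> _\<close> by blast
  then have "w \<bullet> v = w \<bullet> k" using tk(3) by (simp add: inner_add_right)
  moreover have "w \<bullet> v = (\<bar>R\<bar> + 1) * norm w"
    unfolding v_def using nw by (simp add: power2_norm_eq_inner[symmetric] power2_eq_square)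
  moreover have "\<bar>w \<bullet> k\<bar> \<le> norm w * norm k" by (rule Cauchy_Schwarz_ineq2)
  moreover have "norm w * norm k \<le> norm w * \<bar>R\<bar>" using R[OF tk(2)] nw by (intro mult_left_mono) auto
  ultimately have "(\<bar>R\<bar> + 1) * norm w \<le> \<bar>R\<bar> * norm w" by (simp add: algebra_simps)
  then show False using nw by (simp add: algebra_simps)
qed

lemma cocompact_image_independent_pair:
  fixes A :: "real^2^2" and Q :: "(real^2) set"
  assumes A: "invertible A" and cc: "cocompact (closure ((\<lambda>q. A *v q) ` Q))"
  shows "\<exists>q1\<in>Q. \<exists>q2\<in>Q. q1$1 * q2$2 - q1$2 * q2$1 \<noteq> 0"
proof -
  have "\<exists>s\<in>(\<lambda>q. A *v q) ` Q. vector [1, 0] \<bullet> s \<noteq> 0"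
    using cocompact_closure_not_orthogonal[OF cc] by (simp add: vec_2_eq_iff)
  then obtain q0 where q0: "q0 \<in> Q" "A *v q0 \<noteq> 0" by force
  define a where "a = A *v q0"
  have "vector [- a$2, a$1] \<noteq> (0::real^2)" using q0(2) unfolding a_def vec_2_eq_iff by auto
  then obtain q where q: "q \<in> Q" "vector [- a$2, a$1] \<bullet> (A *v q) \<noteq> 0"
    using cocompact_closure_not_orthogonal[OF cc] by blast
  have "vector [- a$2, a$1] \<bullet> (A *v q) = det A * (q0$1 * q$2 - q0$2 * q$1)"
    unfolding inner_2 a_def matrix_vector_mult_2 det_2 by (simp add: algebra_simps)
  then show ?thesis using q q0(1) by auto
qed

lemma matrix_inv_2x2:
  fixes E :: "real^2^2"
  assumes "det E \<noteq> 0"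
  shows "matrix_inv E = (1 / det E) *\<^sub>R vector [vector [E$2$2, - E$1$2], vector [- E$2$1, E$1$1]]"
proof (rule matrix_inv_unique)
  show "invertible E" using assms by (simp add: invertible_det_nz)
  let ?J = "vector [vector [E$2$2, - E$1$2], vector [- E$2$1, E$1$1]] :: real^2^2"
  have J: "?J ** E = det E *\<^sub>R mat 1"
    unfolding vec_eq_iff forall_2 matrix_matrix_mult_2 by (simp add: mat_def det_2 algebra_simps)
  have "(1 / det E) *\<^sub>R ?J ** E = (1 / det E) *\<^sub>R (?J ** E)" by (simp add: scalar_matrix_assoc)
  also have "\<dots> = mat 1" using J assms by simp
  finally show "(1 / det E) *\<^sub>R ?J ** E = mat 1" .
qed

lemma add_subgroup_int_vecs_2:
  fixes Q :: "(real^2) set"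
  assumes Q: "add_subgroup Q" and e: "vector [1, 0] \<in> Q" "vector [0, 1] \<in> Q"
  shows "int_vecs \<subseteq> Q"
proof
  fix z :: "real^2" assume "z \<in> int_vecs"
  then obtain k l where kl: "z = vector [of_int k, of_int l]" by (rule int_vecs_2_cases)
  have "of_int k *\<^sub>R (vector [1, 0] :: real^2) \<in> Q" "of_int l *\<^sub>R (vector [0, 1] :: real^2) \<in> Q"
    by (rule add_subgroup_int_multiples[OF Q e(1)] add_subgroup_int_multiples[OF Q e(2)];
        simp add: algebra_simps)+
  moreover have "z = of_int k *\<^sub>R vector [1, 0] + of_int l *\<^sub>R vector [0, 1]"
    unfolding kl vector_2_algebra by simp
  ultimately show "z \<in> Q" using Q unfolding add_subgroup_def by auto
qed

text \<open>Rebasing along two independent vectors of \<open>Q\<close> (a rational change of basis) makes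
  \<open>Q\<close> contain \<open>\<int>\<^sup>2\<close>.\<close>

lemma off_rational_integral_form:
  fixes S :: "(real^2) set"
  assumes "off_rational S"
  obtains A :: "real^2^2" and Q where "invertible A" "add_subgroup Q" "Q \<subseteq> rat_vecs"
    "S = (\<lambda>q. A *v q) ` Q" "int_vecs \<subseteq> Q"
proof -
  obtain A0 :: "real^2^2" and Q0 where AQ: "invertible A0" "add_subgroup Q0" "Q0 \<subseteq> rat_vecs"
    "S = (\<lambda>q. A0 *v q) ` Q0" and cc: "cocompact (closure S)"
    using assms unfolding off_rational_def by blast
  obtain q1 q2 where q: "q1 \<in> Q0" "q2 \<in> Q0" "q1$1 * q2$2 - q1$2 * q2$1 \<noteq> 0"
    using cocompact_image_independent_pair[OF AQ(1) cc[unfolded AQ(4)]] by blast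
  define E where "E = (vector [vector [q1$1, q2$1], vector [q1$2, q2$2]] :: real^2^2)"
  have dE: "det E \<noteq> 0" using q(3) unfolding E_def det_2 by (simp add: algebra_simps)
  then have E: "invertible E" by (simp add: invertible_det_nz)
  define F where "F = matrix_inv E"
  have F_rat: "F$i$j \<in> \<rat>" for i j
  proof -
    have "q1$k \<in> \<rat>" "q2$k \<in> \<rat>" for k using q(1,2) AQ(3) unfolding rat_vecs_def by auto
    then show ?thesis unfolding F_def matrix_inv_2x2[OF dE] unfolding E_def det_2
      using exhaust_2[of i] exhaust_2[of j] by (auto intro!: Rats_divide Rats_mult Rats_diff simp: Rats_minus_iff)
  qed
  show thesis
  proof
    show "invertible (A0 ** E)" using AQ(1) E by (simp add: invertible_mult)
    show Q: "add_subgroup ((\<lambda>q. F *v q) ` Q0)"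
      by (rule add_subgroup_linear_image[OF matrix_vector_mul_linear AQ(2)])
    show "(\<lambda>q. F *v q) ` Q0 \<subseteq> rat_vecs"
    proof
      fix v assume "v \<in> (\<lambda>q. F *v q) ` Q0"
      then obtain q where "q \<in> Q0" "v = F *v q" by auto
      then show "v \<in> rat_vecs" using AQ(3) F_rat unfolding rat_vecs_def matrix_vector_mult_def
        by (auto intro!: Rats_sum Rats_mult)
    qed
    have "(A0 ** E) *v (F *v q) = A0 *v q" for q
      unfolding F_def by (simp add: matrix_vector_mul_assoc matrix_inv_right[OF E] flip: matrix_mul_assoc)
    then show "S = (\<lambda>q. (A0 ** E) *v q) ` (\<lambda>q. F *v q) ` Q0" unfolding AQ(4) image_image by simp
    have "E *v vector [1, 0] = q1" "E *v vector [0, 1] = q2"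
      unfolding E_def vec_2_eq_iff matrix_vector_mult_2 by simp_all
    then have "F *v q1 = vector [1, 0]" "F *v q2 = vector [0, 1]"
      unfolding F_def by (metis matrix_vector_mul_assoc matrix_inv_left[OF E] matrix_vector_mul_lid)+
    then show "int_vecs \<subseteq> (\<lambda>q. F *v q) ` Q0"
      by (intro add_subgroup_int_vecs_2[OF Q]) (use q in force)+
  qed
qed

lemma off_rational_is_tau:
  fixes S :: "(real^2) set"
  assumes "off_rational S"
  shows "is_tau S (tau S)"
proof -
  obtain A :: "real^2^2" and Q where A: "invertible A" and Q: "add_subgroup Q" "Q \<subseteq> rat_vecs"
    "S = (\<lambda>q. A *v q) ` Q" "int_vecs \<subseteq> Q"
    using off_rational_integral_form[OF assms] by metis
  define H where "H n = {v \<in> Q. \<forall>i. of_nat (fact n) * v$i \<in> \<int>}" for n :: nat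
  have "\<exists>G::real^2^2. invertible G \<and> lattice_of G = H n \<and> int_matrix (matrix_inv G)" for n
    unfolding H_def by (rule lattice_of_bounded_denominators[OF Q(1) Q(4)]) simp
  then obtain G where G: "\<And>n. invertible (G n)" "\<And>n. lattice_of (G n) = H n"
    "\<And>n. int_matrix (matrix_inv (G n))" by metis
  define M where "M n = matrix_inv (G n)" for n
  have M_inv: "matrix_inv (M n) = G n" for n
    unfolding M_def by (rule matrix_inv_unique[OF invertible_matrix_inv[OF G(1)] matrix_inv_right[OF G(1)]])
  have H_mono: "H n \<subseteq> H (Suc n)" for n
    unfolding H_def using fact_mult_Ints_Suc by blast
  have "Q = (\<Union>n. H n)"
  proof (intro equalityI subsetI)
    fix v assume v: "v \<in> Q"
    then have "v$1 \<in> \<rat>" "v$2 \<in> \<rat>" using Q(2) unfolding rat_vecs_def by auto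
    then obtain n1 n2 where "\<And>n. n \<ge> n1 \<Longrightarrow> of_nat (fact n) * v$1 \<in> \<int>"
      "\<And>n. n \<ge> n2 \<Longrightarrow> of_nat (fact n) * v$2 \<in> \<int>" by (metis Rats_fact_mult_Ints)
    then have "v \<in> H (n1 + n2)" unfolding H_def using v by (simp add: forall_2)
    then show "v \<in> (\<Union>n. H n)" by blast
  qed (auto simp: H_def)
  then have "is_tau S (\<Union>j. {of_int m * (det A / det (M j)) | m. True})"
    unfolding is_tau_def
    using A Q(1-3) G(1) M_inv H_mono G(2) G(3)[folded M_def, unfolded int_matrix_def]
    by (intro exI[of _ A] exI[of _ Q] exI[of _ M]) (simp add: M_def invertible_matrix_inv lattice_of_def)
  then show ?thesis unfolding tau_def by (rule someI)
qed

lemma off_rational_line: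
  fixes \<xi> :: "real set"
  assumes "off_rational ((vec :: real \<Rightarrow> real^1) ` \<xi>)"
  shows "add_subgroup \<xi>" "\<exists>\<alpha>. \<forall>y\<in>\<xi>. \<exists>r\<in>\<rat>. y = \<alpha> * r" "\<exists>y\<in>\<xi>. y \<noteq> 0"
proof -
  obtain A :: "real^1^1" and Q where Q: "Q \<subseteq> rat_vecs" "(vec :: real \<Rightarrow> real^1) ` \<xi> = (\<lambda>q. A *v q) ` Q"
    and sg: "add_subgroup ((vec :: real \<Rightarrow> real^1) ` \<xi>)"
    and cc: "cocompact (closure ((vec :: real \<Rightarrow> real^1) ` \<xi>))"
    using assms unfolding off_rational_def by blast
  have vec_inj: "(vec x :: real^1) = vec y \<longleftrightarrow> x = y" for x y by (metis vec_component)
  have s: "0 \<in> (vec :: real \<Rightarrow> real^1) ` \<xi>"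
    "\<And>a b. a \<in> (vec :: real \<Rightarrow> real^1) ` \<xi> \<Longrightarrow> b \<in> vec ` \<xi> \<Longrightarrow> a + b \<in> vec ` \<xi>"
    "\<And>a. a \<in> (vec :: real \<Rightarrow> real^1) ` \<xi> \<Longrightarrow> - a \<in> vec ` \<xi>"
    using sg unfolding add_subgroup_def by auto
  show "add_subgroup \<xi>" unfolding add_subgroup_def
  proof (intro conjI ballI)
    show "0 \<in> \<xi>" using s(1) vec_inj by (metis imageE vec_0)
    show "x + y \<in> \<xi>" if "x \<in> \<xi>" "y \<in> \<xi>" for x y
      using s(2)[of "vec x" "vec y"] that vec_inj by (metis image_eqI imageE vec_add)
    show "- x \<in> \<xi>" if "x \<in> \<xi>" for x
      using s(3)[of "vec x"] that vec_inj by (metis image_eqI imageE vec_neg)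
  qed
  have "\<exists>r\<in>\<rat>. y = A$1$1 * r" if "y \<in> \<xi>" for y
  proof -
    have "(vec y :: real^1) \<in> (\<lambda>q. A *v q) ` Q" using Q(2) that by blast
    then obtain q where q: "q \<in> Q" "vec y = A *v q" by auto
    have "y = (A *v q) $ 1" using q(2) by (metis vec_component)
    also have "\<dots> = A$1$1 * q$1" by (simp add: matrix_vector_mult_def sum_1)
    finally show ?thesis using q(1) Q(1) unfolding rat_vecs_def by blast
  qed
  then show "\<exists>\<alpha>. \<forall>y\<in>\<xi>. \<exists>r\<in>\<rat>. y = \<alpha> * r" by blast
  have "\<exists>s\<in>(vec :: real \<Rightarrow> real^1) ` \<xi>. vec 1 \<bullet> s \<noteq> 0"
    by (rule cocompact_closure_not_orthogonal[OF cc]) (simp add: vec_eq_iff)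
  then show "\<exists>y\<in>\<xi>. y \<noteq> 0" by (auto simp: inner_vec_def)
qed

lemma real_add_subgroup_cyclic:
  fixes X :: "real set"
  assumes X: "add_subgroup X" and sub: "X \<subseteq> {of_int k * \<gamma> | k. True}"
    and y0: "y0 \<in> X" "y0 \<noteq> 0"
  shows "\<exists>g>0. X = {of_int m * g | m. True}"
proof -
  define G where "G = {k::int. of_int k * \<gamma> \<in> X}"
  have "add_subgroup G"
    using X unfolding add_subgroup_def G_def by (simp add: distrib_right)
  moreover obtain k0 where k0: "y0 = of_int k0 * \<gamma>" using sub y0(1) by blast
  moreover have "k0 \<noteq> 0" "\<gamma> \<noteq> 0" using k0 y0(2) by auto
  moreover have "\<bar>k0\<bar> \<in> G"
    using k0 y0(1) X unfolding G_def add_subgroup_def by (cases "k0 \<ge> 0") auto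
  ultimately obtain a where a: "a > 0" "G = {k * a | k. True}"
    using int_add_subgroup_cyclic[of G "\<bar>k0\<bar>"] by auto
  have "\<exists>s::int. \<bar>\<gamma>\<bar> = of_int s * \<gamma> \<and> s * s = 1"
  proof (cases "\<gamma> \<ge> 0")
    case True then show ?thesis by (intro exI[of _ 1]) simp
  next
    case False then show ?thesis by (intro exI[of _ "-1"]) simp
  qed
  then obtain s :: int where s: "\<bar>\<gamma>\<bar> = of_int s * \<gamma>" "s * s = 1" by blast
  have "X = {of_int m * (of_int a * \<bar>\<gamma>\<bar>) | m. True}"
  proof (intro equalityI subsetI)
    fix y assume "y \<in> X"
    then obtain k where k: "y = of_int k * \<gamma>" "k \<in> G" using sub unfolding G_def by auto
    obtain m where m: "k = m * a" using k(2) a(2) by auto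
    have "of_int s * of_int s = (1::real)" using s(2) by (metis of_int_1 of_int_mult)
    then have "of_int (m * s) * (of_int a * \<bar>\<gamma>\<bar>) = of_int m * of_int a * (of_int s * of_int s) * \<gamma>"
      unfolding s(1) by (simp add: algebra_simps)
    also have "\<dots> = y" using \<open>of_int s * of_int s = (1::real)\<close> unfolding k(1) m by simp
    finally have "y = of_int (m * s) * (of_int a * \<bar>\<gamma>\<bar>)" ..
    then show "y \<in> {of_int m * (of_int a * \<bar>\<gamma>\<bar>) | m. True}" by blast
  next
    fix y assume "y \<in> {of_int m * (of_int a * \<bar>\<gamma>\<bar>) | m. True}"
    then obtain m where "y = of_int (m * s * a) * \<gamma>" unfolding s(1) by (auto simp: algebra_simps)
    moreover have "m * s * a \<in> G" using a(2) by auto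
    ultimately show "y \<in> X" unfolding G_def by simp
  qed
  then show ?thesis using a(1) \<open>\<gamma> \<noteq> 0\<close> by (intro exI[of _ "of_int a * \<bar>\<gamma>\<bar>"]) simp
qed

text \<open>The generators are those of \<open>\<xi> \<inter> (\<alpha> / n!) \<int>\<close> for \<open>n \<ge> n\<^sub>0\<close>, where \<open>\<xi> \<subseteq> \<alpha> \<rat>\<close> and
  \<open>n\<^sub>0\<close> is large enough for these groups to be nonzero.\<close>

lemma off_rational_line_chain:
  fixes \<xi> :: "real set"
  assumes "off_rational ((vec :: real \<Rightarrow> real^1) ` \<xi>)"
  obtains g :: "nat \<Rightarrow> real" where "\<And>j. g j > 0" "\<And>j. int_multiple (g (Suc j)) (g j)"
    "(\<Union>j. {of_int m * g j | m. True}) = \<xi>"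
proof -
  note \<xi> = off_rational_line[OF assms]
  obtain \<alpha> where \<alpha>: "\<And>y. y \<in> \<xi> \<Longrightarrow> \<exists>r\<in>\<rat>. y = \<alpha> * r" using \<xi>(2) by blast
  obtain y0 where y0: "y0 \<in> \<xi>" "y0 \<noteq> 0" using \<xi>(3) by blast
  obtain r0 where r0: "r0 \<in> \<rat>" "y0 = \<alpha> * r0" using \<alpha>[OF y0(1)] by blast
  have "\<alpha> \<noteq> 0" using r0 y0 by auto
  obtain n0 where n0: "\<And>n. n \<ge> n0 \<Longrightarrow> of_nat (fact n) * r0 \<in> \<int>"
    using Rats_fact_mult_Ints[OF r0(1)] by blast
  define P where "P n = {y \<in> \<xi>. of_nat (fact n) * (y / \<alpha>) \<in> \<int>}" for n
  have P_cyclic: "\<exists>g>0. P n = {of_int m * g | m. True}" if "n \<ge> n0" for n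
  proof (rule real_add_subgroup_cyclic)
    show "add_subgroup (P n)"
      using \<xi>(1) unfolding add_subgroup_def P_def by (simp add: add_divide_distrib distrib_left)
    show "P n \<subseteq> {of_int k * (\<alpha> / of_nat (fact n)) | k. True}"
    proof
      fix y assume "y \<in> P n"
      then obtain k where "of_nat (fact n) * (y / \<alpha>) = of_int k" unfolding P_def by (auto elim: Ints_cases)
      then have "y = of_int k * (\<alpha> / of_nat (fact n))" using \<open>\<alpha> \<noteq> 0\<close> by (simp add: field_simps)
      then show "y \<in> {of_int k * (\<alpha> / of_nat (fact n)) | k. True}" by blast
    qed
    show "y0 \<in> P n" using y0(1) n0[OF that] \<open>\<alpha> \<noteq> 0\<close> unfolding P_def r0(2) by simp
  qed (rule y0(2))
  then have "\<forall>j. \<exists>g>0. P (n0 + j) = {of_int m * g | m. True}" by simp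
  then obtain g where g: "\<And>j. g j > 0" "\<And>j. P (n0 + j) = {of_int m * g j | m. True}"
    by metis
  have P_mono: "P n \<subseteq> P (Suc n)" for n unfolding P_def using fact_mult_Ints_Suc by blast
  show thesis
  proof
    show "g j > 0" for j by (rule g(1))
    have "g j \<in> P (n0 + Suc j)" for j using g(2)[of j] P_mono[of "n0 + j"] by force
    then show "int_multiple (g (Suc j)) (g j)" for j
      unfolding int_multiple_def using g(2)[of "Suc j"] by auto
    show "(\<Union>j. {of_int m * g j | m. True}) = \<xi>"
    proof (intro equalityI subsetI)
      fix y assume "y \<in> (\<Union>j. {of_int m * g j | m. True})"
      then show "y \<in> \<xi>" using g(2) unfolding P_def by blast
    next
      fix y assume y: "y \<in> \<xi>"
      obtain r where r: "r \<in> \<rat>" "y = \<alpha> * r" using \<alpha>[OF y] by blast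
      obtain n1 where "\<And>n. n \<ge> n1 \<Longrightarrow> of_nat (fact n) * r \<in> \<int>"
        using Rats_fact_mult_Ints[OF r(1)] by blast
      then have "y \<in> P (n0 + n1)" unfolding P_def using y r(2) \<open>\<alpha> \<noteq> 0\<close> by simp
      then show "y \<in> (\<Union>j. {of_int m * g j | m. True})" using g(2)[of n1] by blast
    qed
  qed
qed

section \<open>Nested lattices realising \<open>S\<close> and \<open>\<xi>\<close>\<close>

lemma dual_lat_transpose_basis:
  fixes A M :: "real^'n^'n"
  assumes A: "invertible A" and M: "invertible M"
  shows "dual_lat (lattice_of (transpose (M ** matrix_inv A))) = (\<lambda>v. A *v v) ` lattice_of (matrix_inv M)"
proof -
  have MA: "invertible (M ** matrix_inv A)"
    using A M by (simp add: invertible_mult invertible_matrix_inv)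
  have "(A ** matrix_inv M) ** (M ** matrix_inv A) = A ** (matrix_inv M ** M) ** matrix_inv A"
    by (simp add: matrix_mul_assoc)
  also have "\<dots> = mat 1" by (simp add: matrix_inv_left[OF M] matrix_mul_rid matrix_inv_right[OF A])
  finally have inv: "matrix_inv (M ** matrix_inv A) = A ** matrix_inv M"
    by (rule matrix_inv_unique[OF MA])
  have "invertible (transpose (M ** matrix_inv A))"
    using MA by (simp add: transpose_invertible)
  then show ?thesis
    by (simp add: dual_lat_lattice_of inv lattice_of_mult)
qed

lemma is_tau_lattice_chain:
  fixes S :: "(real^'n) set"
  assumes "is_tau S T"
  obtains A :: "real^'n^'n" and Q and M :: "nat \<Rightarrow> real^'n^'n"
  where "invertible A" "S = (\<lambda>q. A *v q) ` Q" "\<And>j. invertible (M j)"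
    "\<And>k k'. k \<le> k' \<Longrightarrow> \<exists>U. int_matrix U \<and> M k' = U ** M k"
    "\<And>k. (\<And>j. j \<le> k j) \<Longrightarrow> (\<Union>j. lattice_of (matrix_inv (M (k j)))) = Q"
    "T = (\<Union>j. {of_int m * (det A / det (M j)) | m. True})"
proof -
  obtain A :: "real^'n^'n" and Q and M :: "nat \<Rightarrow> real^'n^'n" where
    A: "invertible A" and SQ: "S = (\<lambda>q. A *v q) ` Q" and
    M: "\<forall>j. invertible (M j) \<and> (\<forall>i k. M j $ i $ k \<in> \<int>)" and
    nest: "\<forall>j. (\<lambda>z. matrix_inv (M j) *v z) ` int_vecs \<subseteq> (\<lambda>z. matrix_inv (M (Suc j)) *v z) ` int_vecs" and
    Q: "Q = (\<Union>j. (\<lambda>z. matrix_inv (M j) *v z) ` int_vecs)" and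
    T: "T = (\<Union>j. {of_int m * (det A / det (M j)) | m. True})"
    using assms unfolding is_tau_def by (elim exE conjE) (rule that)
  have M_inv: "\<And>j. invertible (M j)" using M by simp
  have mono: "lattice_of (matrix_inv (M k)) \<subseteq> lattice_of (matrix_inv (M k'))" if "k \<le> k'" for k k'
    using nest lift_Suc_mono_le[of "\<lambda>j. lattice_of (matrix_inv (M j))", OF _ that]
    unfolding lattice_of_def by simp
  show thesis
  proof
    show "\<exists>U. int_matrix U \<and> M k' = U ** M k" if "k \<le> k'" for k k'
      by (rule lattice_of_inv_subset_imp_int_factor[OF M_inv M_inv mono[OF that]])
    show "(\<Union>j. lattice_of (matrix_inv (M (k j)))) = Q" if "\<And>j. j \<le> k j" for k
      unfolding Q lattice_of_def[symmetric] using mono[OF that] by blast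
  qed (use A SQ M_inv T in auto)
qed

text \<open>The planar lattices are the duals of \<open>A M\<^sub>k\<^sub>j\<^sup>-\<^sup>1 \<int>\<^sup>2 \<subseteq> S\<close>, along a subsequence \<open>k\<^sub>j\<close>
  of the data defining \<open>\<tau>(S)\<close> chosen so that \<open>g\<^sub>j\<close> is an integer multiple of
  \<open>det A / det M\<^sub>K\<close> for some \<open>K \<le> k\<^sub>j\<close>.\<close>

lemma tau_dual_bases:
  fixes S :: "(real^2) set" and g :: "nat \<Rightarrow> real"
  assumes S: "off_rational S" and g: "\<And>j. g j \<in> tau S" "\<And>j. g j > 0"
  obtains B :: "nat \<Rightarrow> real^2^2" where "\<And>j. det (B j) \<noteq> 0" "\<And>j. int_multiple (1 / g j) (det (B j))"
    "\<And>j. \<exists>C. int_matrix C \<and> B (Suc j) = B j ** C" "(\<Union>j. dual_lat (lattice_of (B j))) = S"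
proof -
  obtain A :: "real^2^2" and Q and M :: "nat \<Rightarrow> real^2^2" where
    A: "invertible A" and SQ: "S = (\<lambda>q. A *v q) ` Q" and M: "\<And>j. invertible (M j)" and
    factor: "\<And>k k'. k \<le> k' \<Longrightarrow> \<exists>U. int_matrix U \<and> M k' = U ** M k" and
    Q: "\<And>k. (\<And>j. j \<le> k j) \<Longrightarrow> (\<Union>j. lattice_of (matrix_inv (M (k j)))) = Q" and
    T: "tau S = (\<Union>j. {of_int m * (det A / det (M j)) | m. True})"
    using is_tau_lattice_chain[OF off_rational_is_tau[OF S]] by blast
  have "\<exists>K m. g j = of_int m * (det A / det (M K))" for j
    using g(1)[of j] unfolding T by blast
  then obtain K and m :: "nat \<Rightarrow> int" where K: "\<And>j. g j = of_int (m j) * (det A / det (M (K j)))"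
    by metis
  define k where "k j = j + (\<Sum>i\<le>j. K i)" for j
  have k: "K j \<le> k j" "j \<le> k j" "k j \<le> k (Suc j)" for j
    unfolding k_def using member_le_sum[of j "{..j}" K] by auto
  define B where "B j = transpose (M (k j) ** matrix_inv A)" for j
  have det_B: "det (B j) = det (M (k j)) / det A" for j
    unfolding B_def by (simp add: det_mul det_matrix_inv[OF A])
  have dA: "det A \<noteq> 0" and dM: "\<And>j. det (M j) \<noteq> 0"
    using A M by (simp_all add: invertible_det_nz)
  show thesis
  proof
    show "det (B j) \<noteq> 0" for j using det_B dA dM by simp
    show "int_multiple (1 / g j) (det (B j))" for j
    proof -
      obtain U where U: "int_matrix U" "M (k j) = U ** M (K j)" using factor[OF k(1)] by blast
      obtain d where d: "det U = of_int d" using int_matrix_det[OF U(1)] by (auto elim: Ints_cases)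
      have "m j \<noteq> 0" using K[of j] g(2)[of j] by auto
      then have "det (B j) = of_int (d * m j) * (1 / g j)"
        unfolding det_B U(2) det_mul d K using dA dM[of "K j"] by (simp add: field_simps)
      then show ?thesis by (simp only: int_multiple_of_int)
    qed
    show "\<exists>C. int_matrix C \<and> B (Suc j) = B j ** C" for j
    proof -
      obtain U where U: "int_matrix U" "M (k (Suc j)) = U ** M (k j)" using factor[OF k(3)] by blast
      have "B (Suc j) = B j ** transpose U"
        unfolding B_def U(2) by (simp add: matrix_transpose_mul matrix_mul_assoc)
      then show ?thesis using int_matrix_transpose[OF U(1)] by blast
    qed
    show "(\<Union>j. dual_lat (lattice_of (B j))) = S"
      unfolding B_def dual_lat_transpose_basis[OF A M] SQ Q[OF k(2), symmetric] by blast
  qed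
qed

lemma Inter_lattice_of_dense_duals:
  fixes B :: "nat \<Rightarrow> real^'n^'n"
  assumes "\<And>j. invertible (B j)" "closure (\<Union>j. dual_lat (lattice_of (B j))) = UNIV"
  shows "(\<Inter>j. lattice_of (B j)) = {0}"
proof (intro equalityI subsetI)
  fix x assume x: "x \<in> (\<Inter>j. lattice_of (B j))"
  have "x \<bullet> s \<in> \<int>" if "s \<in> (\<Union>j. dual_lat (lattice_of (B j)))" for s
    using that x inner_lattice_of_dual_Ints[OF assms(1)] by (auto simp: dual_lat_lattice_of[OF assms(1)])
  then show "x \<in> {0}" using inner_Ints_on_dense_imp_zero[OF assms(2)] by blast
qed (auto simp: lattice_of_def int_vecs_def intro!: image_eqI[of 0 _ 0])

lemma Inter_heis_lattices_trivial:
  fixes \<Gamma> :: "nat \<Rightarrow> heis set" and \<eta> :: "nat \<Rightarrow> real"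
  assumes "(\<Inter>j. heis_p ` \<Gamma> j) = {0}" "\<And>j. heis_one \<in> \<Gamma> j" "\<And>j. \<eta> j > 0"
    and "\<And>j. \<Gamma> j \<inter> range heis_c = {heis_c (of_int m * \<eta> j) | m. True}"
    and "closure (\<Union>j. {of_int m / \<eta> j | m. True}) = UNIV"
  shows "(\<Inter>j. \<Gamma> j) = {heis_one}"
proof (intro equalityI subsetI)
  fix h assume h: "h \<in> (\<Inter>j. \<Gamma> j)"
  obtain a b c where abc: "h = (a, b, c)" by (cases h)
  have "heis_p h = 0" using h assms(1) by blast
  then have h_c: "h = heis_c c" unfolding abc heis_p_Pair heis_c_def vec_2_eq_iff by simp
  have "c \<bullet> y \<in> \<int>" if y_in: "y \<in> (\<Union>j. {of_int m / \<eta> j | m. True})" for y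
  proof -
    obtain j m where y: "y = of_int m / \<eta> j" using y_in by blast
    have "h \<in> \<Gamma> j \<inter> range heis_c" using h h_c by blast
    then obtain k where "c = of_int k * \<eta> j" unfolding assms(4) h_c heis_c_def by auto
    then have "c * y = of_int (k * m)" unfolding y using assms(3)[of j] by simp
    then show ?thesis by simp
  qed
  then have "c = 0" by (rule inner_Ints_on_dense_imp_zero[OF assms(5)])
  then show "h \<in> {heis_one}" unfolding h_c heis_c_def heis_one_def by simp
qed (use assms(2) in blast)

theorem proposition5p5:
  fixes S :: "(real^2) set" and \<xi> :: "real set"
  assumes "off_rational S"
    and "off_rational ((vec :: real \<Rightarrow> real^1) ` \<xi>)"
    and "\<xi> \<subseteq> tau S"
  shows "\<exists>\<Gamma> :: nat \<Rightarrow> heis set.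
           (\<forall>j. heis_lattice (\<Gamma> j)) \<and> (\<forall>j. \<Gamma> (Suc j) \<subseteq> \<Gamma> j) \<and>
           S_Gamma \<Gamma> = S \<and> xi_Gamma \<Gamma> = \<xi> \<and>
           (closure S = UNIV \<longrightarrow> (\<Inter>j. heis_p ` \<Gamma> j) = {0}) \<and>
           (closure S = UNIV \<and> closure \<xi> = UNIV \<longrightarrow> (\<Inter>j. \<Gamma> j) = {heis_one})"
proof -
  obtain g where g: "\<And>j. g j > 0" "\<And>j. int_multiple (g (Suc j)) (g j)"
    "(\<Union>j. {of_int m * g j | m. True}) = \<xi>"
    using off_rational_line_chain[of \<xi>, OF assms(2)] by blast
  have "of_int 1 * g j \<in> \<xi>" for j unfolding g(3)[symmetric] by blast
  then have g_tau: "g j \<in> tau S" for j using assms(3) by auto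
  obtain B where B: "\<And>j. det (B j) \<noteq> 0" "\<And>j. int_multiple (1 / g j) (det (B j))"
    "\<And>j. \<exists>C. int_matrix C \<and> B (Suc j) = B j ** C" "(\<Union>j. dual_lat (lattice_of (B j))) = S"
    using tau_dual_bases[of S g, OF assms(1) g_tau g(1)] by blast
  have \<eta>_mult: "int_multiple (1 / g j) (1 / g (Suc j))" for j
    by (rule int_multiple_inverse[OF g(2) g(1) g(1)])
  have \<eta>_pos: "1 / g j > 0" for j using g(1) by simp
  obtain \<Gamma> where \<Gamma>: "\<And>j. heis_lattice (\<Gamma> j)" "\<And>j. \<Gamma> (Suc j) \<subseteq> \<Gamma> j"
    "\<And>j. heis_p ` \<Gamma> j = lattice_of (B j)"
    "\<And>j. \<Gamma> j \<inter> range heis_c = {heis_c (of_int m * (1 / g j)) | m. True}"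
    using heis_lat_chain[of B "\<lambda>j. 1 / g j", OF B(1) \<eta>_pos B(2) B(3) \<eta>_mult] by blast
  have S: "S_Gamma \<Gamma> = S" unfolding S_Gamma_def \<Gamma>(3) B(4) ..
  have xi_lat: "xi_lat (\<Gamma> j) = 1 / g j" for j by (rule xi_lat_eqI[OF _ \<Gamma>(4)]) (simp add: g(1))
  have X: "xi_Gamma \<Gamma> = \<xi>" unfolding xi_Gamma_def xi_lat using g(3) by simp
  have P: "(\<Inter>j. heis_p ` \<Gamma> j) = {0}" if "closure S = UNIV"
    unfolding \<Gamma>(3) using B(1) that[folded B(4)]
    by (intro Inter_lattice_of_dense_duals) (simp_all add: invertible_det_nz)
  have "heis_one \<in> \<Gamma> j" for j using \<Gamma>(1) unfolding heis_lattice_def heis_subgroup_def by blast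
  then have "(\<Inter>j. \<Gamma> j) = {heis_one}" if "closure S = UNIV" "closure \<xi> = UNIV"
    using Inter_heis_lattices_trivial[OF P[OF that(1)] _ _ \<Gamma>(4)] that(2) g(1)
    unfolding X[symmetric] xi_Gamma_def xi_lat by simp
  then show ?thesis using \<Gamma>(1,2) S X P by blast
qed

end
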